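(* Let $\phi=(\text{B-code})^{-1}\circ(\text{A-code}):\mathsf{G}_{r,n}\to\mathsf{G}_{r,n}$. For every $\pi\in\mathsf{G}_{r,n}$, $$\bigl(\ell,\mathsf{Rmil}^0,\mathsf{Rmil}^1,\dots,\mathsf{Rmil}^{r-1},\mathsf{Lmil}^0,\dots,\mathsf{Lmil}^{r-1},\mathsf{Lmal}^0,\dots,\mathsf{Lmal}^{r-1},\mathsf{Lmap}^0,\dots,\mathsf{Lmap}^{r-1}\bigr)(\pi)$$ equals $$\bigl(\mathsf{sor},\mathsf{Cyc}^0,\mathsf{Cyc}^{r-1},\dots,\mathsf{Cyc}^{1},\mathsf{Lmic}^0,\mathsf{Lmic}^{r-1},\dots,\mathsf{Lmic}^1,\mathsf{Lmal}^0,\mathsf{Lmal}^{r-1},\dots,\mathsf{Lmal}^1,\mathsf{Lmap}^0,\mathsf{Lmap}^{r-1},\dots,\mathsf{Lmap}^1\bigr)(\phi(\pi)),$$ i.e. $\ell(\pi)=\mathsf{sor}(\phi(\pi))$ and, for every $t\in\mathbb Z/r$, $\mathsf{Rmil}^t(\pi)=\mathsf{Cyc}^{-t}(\phi(\pi))$, $\mathsf{Lmil}^t(\pi)=\mathsf{Lmic}^{-t}(\phi(\pi))$, $\mathsf{Lmal}^t(\pi)=\mathsf{Lmal}^{-t}(\phi(\pi))$, $\mathsf{Lmap}^t(\pi)=\mathsf{Lmap}^{-t}(\phi(\pi))$.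
   Context: $\mathsf{G}_{r,n}=C_r\wr\mathfrak S_n$: pairs $(\sigma,\mathbf z)$, $\sigma\in\mathfrak S_n$, $\mathbf z\in(\mathbb Z/r)^n$, written $\pi=\sigma_1^{[z_1]}\cdots\sigma_n^{[z_n]}$ (colors in $\{0,\dots,r-1\}$, read mod $r$); product $(\sigma,\mathbf z)(\rho,\mathbf w)=(\sigma\rho,\mathbf w+\rho(\mathbf z))$, $\rho(\mathbf z)=(z_{\rho(1)},\dots,z_{\rho(n)})$; $\pi$ acts on $\{i^{[t]}\}$ by $\pi(i^{[t]})=\sigma_i^{[z_i+t]}$, and $i^{[0]}=i$. $\ell(\pi)$: minimal number of factors in an expression of $\pi$ as a product of $s_0=1^{[1]}2\cdots n$ and $s_i$ ($1\le i<n$; base permutation $(i\ i+1)$, colors $0$). For $1\le i<j$, right multiplication of a word $\tau_1^{[y_1]}\cdots\tau_j^{[y_j]}$ by $(i^{[t]}\,j)$ replaces the letter at position $j$ by $\tau_i^{[y_i+t]}$ and that at position $i$ by $\tau_j^{[y_j-t]}$. $\mathsf{CS}_{r,n}=\{(c_1^{[e_1]},\dots,c_n^{[e_n]}):1\le c_i\le i,\ 0\le e_i<r\}$. A-code: $\pi^{(n)}=\pi$; for $j=n,\dots,1$, if base value $j$ is at position $p$ of $\pi^{(j)}$ with color $t$, set $c_j=p,e_j=t$ and delete it to get $\pi^{(j-1)}$. B-code: $\pi^{(n)}=\pi$; for $j=n,\dots,1$, $c_j$ = position of base value $j$ in $\pi^{(j)}$, $z$ its color, $e_j\equiv-z\pmod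 r$; $\pi^{(j-1)}$ = first $j-1$ letters of $\pi^{(j)}\cdot(c_j^{[e_j]}\,j)$ if $c_j<j$, of $\pi^{(j)}$ if $c_j=j$. Both codes are bijections $\mathsf{G}_{r,n}\to\mathsf{CS}_{r,n}$. $\mathsf{sor}(\pi)=\sum_j\bigl(j-c_j+\chi(e_j>0)(2(c_j-1)+e_j)\bigr)$ with $(c_j^{[e_j]})=\text{B-code}(\pi)$ (total distance of the paper's sorting process), $\chi$ the indicator. Statistics: $\mathsf{Rmil}(\pi)=\{\sigma_i^{[z_i]}:\sigma_i<\sigma_j\,\forall j>i\}$, $\mathsf{Lmil}(\pi)=\{\sigma_i^{[z_i]}:\sigma_i<\sigma_j\,\forall j<i\}$, $\mathsf{Lmal}(\pi)=\{\sigma_i^{[z_i]}:\sigma_i>\sigma_j\,\forall j<i\}$, $\mathsf{Lmap}(\pi)=\{i^{[z_i]}:\sigma_i>\sigma_j\,\forall j<i\}$; $\mathsf{Cyc}(\pi)$ = set of $\alpha^{[c]}$ over cycles of $\sigma$ with element set $B$, $\alpha=\min B$, $c\equiv\sum_{k\in B}z_k$; $\mathsf{Lmic}(\pi)$ = set of letters of the word $\pi(1)\pi^2(1)\cdots\pi^m(1)$ ($m\ge1$ least with $\pi^m(1)=1$) whose base value is smaller than those of all earlier letters. For a set $S$ of colored letters, $S^t=\{k:k^{[t]}\in S\}$. *)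

theory Defs
  imports Main
begin

text \<open>A colored permutation pi = sigma_1^[z_1] ... sigma_n^[z_n] of G_{r,n} is represented by
  the list of its letters [(sigma_1,z_1), ..., (sigma_n,z_n)]; base values in {1..n},
  colors in {0..<r}.  List index i (0-based) corresponds to position i+1.\<close>

type_synonym cword = "(nat \<times> nat) list"

definition cperms :: "nat \<Rightarrow> nat \<Rightarrow> cword set" where
  "cperms r n = {w. length w = n \<and> distinct (map fst w) \<and> set (map fst w) = {1..n}
                    \<and> (\<forall>x\<in>set w. snd x < r)}"

definition cneg :: "nat \<Rightarrow> nat \<Rightarrow> nat" where
  "cneg r t = (r - t mod r) mod r"

text \<open>Product (sigma,z)(rho,w) = (sigma rho, w + rho(z)): the letter at position i of the
  product is sigma_{rho_i}^[z_{rho_i} + w_i].\<close>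
definition cmul :: "nat \<Rightarrow> cword \<Rightarrow> cword \<Rightarrow> cword" where
  "cmul r u v = map (\<lambda>(a, c). (fst (u ! (a - 1)), (snd (u ! (a - 1)) + c) mod r)) v"

definition cid :: "nat \<Rightarrow> cword" where
  "cid n = map (\<lambda>k. (k, 0)) [1..<n+1]"

definition gen0 :: "nat \<Rightarrow> nat \<Rightarrow> cword" where
  "gen0 r n = (cid n)[0 := (1, 1 mod r)]"

definition geni :: "nat \<Rightarrow> nat \<Rightarrow> cword" where
  "geni n i = (cid n)[i - 1 := (i + 1, 0), i := (i, 0)]"

definition gens :: "nat \<Rightarrow> nat \<Rightarrow> cword set" where
  "gens r n = {gen0 r n} \<union> {geni n i | i. 1 \<le> i \<and> i < n}"

definition clen :: "nat \<Rightarrow> nat \<Rightarrow> cword \<Rightarrow> nat" where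
  "clen r n w = (LEAST k. \<exists>gs. length gs = k \<and> set gs \<subseteq> gens r n \<and>
                      foldl (cmul r) (cid n) gs = w)"

text \<open>0-based position of the letter with base value k\<close>
definition posof :: "nat \<Rightarrow> cword \<Rightarrow> nat" where
  "posof k w = (LEAST i. i < length w \<and> fst (w ! i) = k)"

text \<open>A-code; the result list has (c_j, e_j) at index j-1.\<close>
fun acode_aux :: "nat \<Rightarrow> cword \<Rightarrow> (nat \<times> nat) list" where
  "acode_aux 0 w = []"
| "acode_aux (Suc j) w =
     (let p = posof (Suc j) w
      in acode_aux j (take p w @ drop (Suc p) w) @ [(p + 1, snd (w ! p))])"

definition acode :: "cword \<Rightarrow> (nat \<times> nat) list" where
  "acode w = acode_aux (length w) w"

text \<open>Right multiplication of a word by the colored transposition (i^[t] j), i < j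
  (1-based positions): the letter at position j becomes tau_i^[y_i + t] and the letter at
  position i becomes tau_j^[y_j - t].\<close>
definition rtransp :: "nat \<Rightarrow> cword \<Rightarrow> nat \<Rightarrow> nat \<Rightarrow> nat \<Rightarrow> cword" where
  "rtransp r w i t j =
     w[j - 1 := (fst (w ! (i - 1)), (snd (w ! (i - 1)) + t) mod r),
       i - 1 := (fst (w ! (j - 1)), (snd (w ! (j - 1)) + cneg r t) mod r)]"

text \<open>B-code; the result list has (c_j, e_j) at index j-1.\<close>
fun bcode_aux :: "nat \<Rightarrow> nat \<Rightarrow> cword \<Rightarrow> (nat \<times> nat) list" where
  "bcode_aux r 0 w = []"
| "bcode_aux r (Suc j) w =
     (let c = posof (Suc j) w + 1; z = snd (w ! (c - 1)); e = cneg r z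
      in bcode_aux r j (if c < Suc j then take j (rtransp r w c e (Suc j)) else take j w)
         @ [(c, e)])"

definition bcode :: "nat \<Rightarrow> cword \<Rightarrow> (nat \<times> nat) list" where
  "bcode r w = bcode_aux r (length w) w"

definition phi :: "nat \<Rightarrow> nat \<Rightarrow> cword \<Rightarrow> cword" where
  "phi r n w = (THE u. u \<in> cperms r n \<and> bcode r u = acode w)"

definition sor :: "nat \<Rightarrow> cword \<Rightarrow> nat" where
  "sor r w = (\<Sum>j = 1..length w. let (c, e) = bcode r w ! (j - 1) in
                 j - c + (if e > 0 then 2 * (c - 1) + e else 0))"

text \<open>Statistics, already restricted to color t (the sets S^t).\<close>
definition Rmil :: "nat \<Rightarrow> cword \<Rightarrow> nat set" where
  "Rmil t w = {fst (w ! i) | i. i < length w \<and> snd (w ! i) = t \<and>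
                 (\<forall>j. i < j \<and> j < length w \<longrightarrow> fst (w ! i) < fst (w ! j))}"

definition Lmil :: "nat \<Rightarrow> cword \<Rightarrow> nat set" where
  "Lmil t w = {fst (w ! i) | i. i < length w \<and> snd (w ! i) = t \<and>
                 (\<forall>j < i. fst (w ! i) < fst (w ! j))}"

definition Lmal :: "nat \<Rightarrow> cword \<Rightarrow> nat set" where
  "Lmal t w = {fst (w ! i) | i. i < length w \<and> snd (w ! i) = t \<and>
                 (\<forall>j < i. fst (w ! i) > fst (w ! j))}"

definition Lmap :: "nat \<Rightarrow> cword \<Rightarrow> nat set" where
  "Lmap t w = {i + 1 | i. i < length w \<and> snd (w ! i) = t \<and>
                 (\<forall>j < i. fst (w ! i) > fst (w ! j))}"

definition bperm :: "cword \<Rightarrow> nat \<Rightarrow> nat" where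
  "bperm w k = fst (w ! (k - 1))"

definition cycle_of :: "cword \<Rightarrow> nat \<Rightarrow> nat set" where
  "cycle_of w k = {(bperm w ^^ m) k | m. True}"

definition Cyc :: "nat \<Rightarrow> nat \<Rightarrow> cword \<Rightarrow> nat set" where
  "Cyc r c w = {Min (cycle_of w k) | k. 1 \<le> k \<and> k \<le> length w \<and>
                 (\<Sum>i\<in>cycle_of w k. snd (w ! (i - 1))) mod r = c}"

definition cact :: "nat \<Rightarrow> cword \<Rightarrow> nat \<times> nat \<Rightarrow> nat \<times> nat" where
  "cact r w x = (fst (w ! (fst x - 1)), (snd (w ! (fst x - 1)) + snd x) mod r)"

definition Lmic :: "nat \<Rightarrow> nat \<Rightarrow> cword \<Rightarrow> nat set" where
  "Lmic r t w =
     (let m0 = (LEAST m. 1 \<le> m \<and> (cact r w ^^ m) (1, 0) = (1, 0))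
      in {fst ((cact r w ^^ m) (1, 0)) | m. 1 \<le> m \<and> m \<le> m0 \<and>
            snd ((cact r w ^^ m) (1, 0)) = t \<and>
            (\<forall>m'. 1 \<le> m' \<and> m' < m \<longrightarrow>
               fst ((cact r w ^^ m) (1, 0)) < fst ((cact r w ^^ m') (1, 0)))})"

end

theory Submission
  imports Defs "HOL-Number_Theory.Cong"
begin

(*
  Both codes peel off the largest letter: the A-code records its position and colour, the
  B-code does the same after moving it to the end by a coloured transposition.  So phi turns
  "insert the largest letter at position p with colour e" (ainsert) into the corresponding
  B-code step (binsert), and everything follows by induction on n from the effect of one such
  step.  On the A-side, the new letter is a right-to-left (left-to-right) minimum only if it
  is put last (first), and it cuts the left-to-right maxima at position p.  On the B-side it
  is spliced into the cycle of the letter at position p (a fixed point of colour -e if p = n),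
  which keeps cycle minima and cycle colour sums modulo r, and along the cycle of 1 it is a new
  left-to-right minimum only if p = 1; it again cuts the left-to-right maxima at position p,
  now with colour -e.  Matching the conditions gives the set identities with t and -t.
  For the length, ell equals an explicit inversion-type statistic (a generator changes it by at
  most one, and it can always be lowered by one), and inserting the largest letter raises this
  statistic by exactly the summand of sor attached to the new code entry (p, e).
*)

section \<open>Colours modulo \<open>r\<close>\<close>

lemma cneg_less: "0 < r \<Longrightarrow> cneg r t < r"
  by (simp add: cneg_def)

lemma cneg_cneg: "t < r \<Longrightarrow> cneg r (cneg r t) = t"
  by (cases "t = 0") (auto simp: cneg_def)

lemma cneg_inject: "t < r \<Longrightarrow> s < r \<Longrightarrow> cneg r t = cneg r s \<longleftrightarrow> t = s"
  by (metis cneg_cneg)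

lemma add_cneg_mod: "0 < r \<Longrightarrow> (e + cneg r e) mod r = 0"
proof -
  assume "0 < r"
  have "(e + cneg r e) mod r = (e mod r + (r - e mod r) mod r) mod r"
    by (simp add: cneg_def mod_add_left_eq)
  also have "\<dots> = (e mod r + (r - e mod r)) mod r"
    by (simp add: mod_add_right_eq)
  finally show ?thesis using \<open>0 < r\<close> by simp
qed

lemma mod_add_cneg_cancel: "0 < r \<Longrightarrow> ((z + e) mod r + (cneg r e + a)) mod r = (z + a) mod r"
proof -
  assume "0 < r"
  have "((z + e) mod r + (cneg r e + a)) mod r = (z + e + (cneg r e + a)) mod r"
    by (rule mod_add_left_eq)
  also have "z + e + (cneg r e + a) = (z + a) + (e + cneg r e)"
    by simp
  also have "((z + a) + (e + cneg r e)) mod r = ((z + a) + (e + cneg r e) mod r) mod r"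
    by (rule mod_add_right_eq[symmetric])
  finally show ?thesis using add_cneg_mod[OF \<open>0 < r\<close>] by simp
qed

lemma mod_add_left_cancel_less:
  "a < (r::nat) \<Longrightarrow> b < r \<Longrightarrow> (z + a) mod r = (z + b) mod r \<Longrightarrow> a = b"
  using cong_add_lcancel_nat[of z a b r] cong_less_modulus_unique_nat[of a b r]
  by (simp add: cong_def)

section \<open>Coloured permutations\<close>

lemma cperms_iff: "w \<in> cperms r n \<longleftrightarrow> length w = n \<and> distinct (map fst w) \<and>
    set (map fst w) = {1..n} \<and> (\<forall>i<n. snd (w!i) < r)"
  unfolding cperms_def mem_Collect_eq all_set_conv_all_nth by auto

lemma cperms_length: "w \<in> cperms r n \<Longrightarrow> length w = n"
  by (simp add: cperms_iff)

lemma cperms_distinct: "w \<in> cperms r n \<Longrightarrow> distinct (map fst w)"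
  by (simp add: cperms_iff)

lemma cperms_colour_less: "w \<in> cperms r n \<Longrightarrow> i < n \<Longrightarrow> snd (w!i) < r"
  by (simp add: cperms_iff)

lemma cperms_value_range:
  assumes "w \<in> cperms r n" and "i < n"
  shows "1 \<le> fst (w!i) \<and> fst (w!i) \<le> n"
proof -
  have "fst (w!i) \<in> set (map fst w)" using assms by (auto simp: cperms_iff)
  thus ?thesis using assms by (auto simp: cperms_iff)
qed

lemma cperms_value_inject:
  assumes "w \<in> cperms r n" and "i < n" "j < n" "fst (w!i) = fst (w!j)"
  shows "i = j"
proof -
  have "distinct (map fst w)" "length w = n" using assms(1) by (auto simp: cperms_iff)
  thus ?thesis using assms(2-4) unfolding distinct_conv_nth by auto
qed

lemma cperms_value_exists:
  assumes "w \<in> cperms r n" and "1 \<le> k" "k \<le> n"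
  obtains i where "i < n" "fst (w!i) = k"
proof -
  have "k \<in> set (map fst w)" using assms by (auto simp: cperms_iff)
  then obtain i where "i < length (map fst w)" "map fst w ! i = k" by (metis in_set_conv_nth)
  thus ?thesis using that assms(1) by (auto simp: cperms_iff)
qed

lemma cperms_0: "w \<in> cperms r 0 \<longleftrightarrow> w = []"
  by (auto simp: cperms_def)

lemma posof_cperms: "w \<in> cperms r n \<Longrightarrow> i < n \<Longrightarrow> fst (w!i) = k \<Longrightarrow> posof k w = i"
  unfolding posof_def
  by (rule Least_equality) (use cperms_value_inject[of w r n] cperms_length[of w r n] in force)+

section \<open>Inserting the largest letter\<close>

text \<open>\<open>ainsert\<close> and \<open>binsert\<close> invert one step of the A-code and of the B-code.\<close>

definition ainsert :: "cword \<Rightarrow> nat \<Rightarrow> nat \<Rightarrow> cword" where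
  "ainsert w p e = take (p - 1) w @ (Suc (length w), e) # drop (p - 1) w"

definition binsert :: "nat \<Rightarrow> cword \<Rightarrow> nat \<Rightarrow> nat \<Rightarrow> cword" where
  "binsert r u p e =
     (if p = Suc (length u) then u @ [(Suc (length u), cneg r e)]
      else (u @ [(Suc (length u), 0)])[length u := (fst (u!(p-1)), (snd (u!(p-1)) + e) mod r),
                                       p - 1 := (Suc (length u), cneg r e)])"

lemma length_ainsert [simp]: "length (ainsert w p e) = Suc (length w)"
  by (simp add: ainsert_def)

lemma nth_ainsert:
  "1 \<le> p \<Longrightarrow> p \<le> Suc (length w) \<Longrightarrow> i < Suc (length w) \<Longrightarrow>
   ainsert w p e ! i =
     (if i < p - 1 then w ! i else if i = p - 1 then (Suc (length w), e) else w ! (i - 1))"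
  by (auto simp: ainsert_def nth_append min_def nth_Cons' less_diff_conv not_less)

lemma length_binsert [simp]: "length (binsert r u p e) = Suc (length u)"
  by (simp add: binsert_def)

lemma nth_binsert:
  "1 \<le> p \<Longrightarrow> p \<le> Suc (length u) \<Longrightarrow> i < Suc (length u) \<Longrightarrow>
   binsert r u p e ! i =
     (if i = p - 1 then (Suc (length u), cneg r e)
      else if i = length u then (fst (u!(p-1)), (snd (u!(p-1)) + e) mod r) else u ! i)"
  by (auto simp: binsert_def nth_append nth_list_update)

lemma distinct_take_Cons_drop:
  assumes "distinct (x # xs)"
  shows "distinct (take k xs @ x # drop k xs)"
proof -
  have "distinct (take k xs @ drop k xs)" using assms by simp
  moreover have "x \<notin> set (take k xs)" "x \<notin> set (drop k xs)"
    using assms by (auto dest: in_set_takeD in_set_dropD)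
  ultimately show ?thesis by (simp only: distinct_append distinct.simps set_append) auto
qed

lemma ainsert_cperms:
  assumes w: "w \<in> cperms r m" and p: "1 \<le> p" "p \<le> Suc m" and e: "e < r"
  shows "ainsert w p e \<in> cperms r (Suc m)"
proof -
  have lw: "length w = m" using w by (rule cperms_length)
  have mf: "map fst (ainsert w p e) = take (p-1) (map fst w) @ Suc m # drop (p-1) (map fst w)"
    by (simp add: ainsert_def lw take_map drop_map)
  have new: "Suc m \<notin> set (map fst w)" using w by (auto simp: cperms_iff)
  have "distinct (map fst (ainsert w p e))"
    unfolding mf by (rule distinct_take_Cons_drop) (use new w in \<open>auto simp: cperms_iff\<close>)
  moreover have "set (map fst (ainsert w p e)) = insert (Suc m) (set (map fst w))"
  proof -
    have "set (map fst w) = set (take (p-1) (map fst w)) \<union> set (drop (p-1) (map fst w))"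
      by (metis append_take_drop_id set_append)
    thus ?thesis unfolding mf by auto
  qed
  moreover have "\<forall>i<Suc m. snd (ainsert w p e ! i) < r"
    using p e cperms_colour_less[OF w] by (auto simp: nth_ainsert lw)
  ultimately show ?thesis using w by (simp add: cperms_iff lw atLeastAtMostSuc_conv)
qed

lemma acode_ainsert:
  assumes w: "w \<in> cperms r m" and p: "1 \<le> p" "p \<le> Suc m" and e: "e < r"
  shows "acode (ainsert w p e) = acode w @ [(p, e)]"
proof -
  have lw: "length w = m" using w by (rule cperms_length)
  have "posof (Suc m) (ainsert w p e) = p - 1"
    by (rule posof_cperms[OF ainsert_cperms[OF w p e]]) (use p in \<open>auto simp: nth_ainsert lw\<close>)
  moreover have "take (p-1) (ainsert w p e) @ drop (Suc (p-1)) (ainsert w p e) = w"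
    using p lw by (simp add: ainsert_def)
  moreover have "snd (ainsert w p e ! (p-1)) = e" using p lw by (simp add: nth_ainsert)
  ultimately show ?thesis using p by (simp add: acode_def lw Let_def)
qed

lemma cperms_Suc_ainsertE:
  assumes w: "w \<in> cperms r (Suc m)"
  obtains w' p e where "w' \<in> cperms r m" "1 \<le> p" "p \<le> Suc m" "e < r" "w = ainsert w' p e"
proof -
  obtain q where q: "q < Suc m" "fst (w!q) = Suc m"
    using cperms_value_exists[OF w, of "Suc m"] by auto
  have lw: "length w = Suc m" using w by (rule cperms_length)
  define w' where "w' = take q w @ drop (Suc q) w"
  have lw': "length w' = m" using q lw by (simp add: w'_def)
  have "ainsert w' (q+1) (snd (w!q)) = take q w @ w!q # drop (Suc q) w"
    using q lw lw' by (simp add: ainsert_def w'_def prod_eq_iff)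
  also have "\<dots> = w" using q lw by (simp add: id_take_nth_drop[symmetric])
  finally have eq: "ainsert w' (q+1) (snd (w!q)) = w" .
  have mw: "map fst w = map fst (take q w) @ Suc m # map fst (drop (Suc q) w)"
    using q lw by (metis id_take_nth_drop list.simps(9) map_append)
  have dw: "distinct (map fst w)" and sw: "set (map fst w) = {1..Suc m}"
    using w by (auto simp: cperms_iff)
  have dw': "distinct (map fst w')" and new: "Suc m \<notin> set (map fst w')"
    using dw unfolding mw by (simp_all add: w'_def)
  have "set (map fst w) = insert (Suc m) (set (map fst w'))"
    unfolding mw w'_def by auto
  hence "set (map fst w') = {1..m}" using sw new
    by (simp add: atLeastAtMostSuc_conv insert_ident)
  moreover have "\<forall>x\<in>set w'. snd x < r" using w unfolding w'_def cperms_def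
    by (auto dest: in_set_takeD in_set_dropD)
  ultimately have "w' \<in> cperms r m" using lw' dw' by (simp add: cperms_def)
  thus ?thesis using that[OF _ _ _ _ eq[symmetric]] q cperms_colour_less[OF w q(1)] by simp
qed

lemma cperms_ainsert_induct [consumes 1, case_names Nil ainsert]:
  assumes "w \<in> cperms r n" and "P 0 []"
    and "\<And>m w p e. w \<in> cperms r m \<Longrightarrow> 1 \<le> p \<Longrightarrow> p \<le> Suc m \<Longrightarrow> e < r \<Longrightarrow> P m w \<Longrightarrow>
           P (Suc m) (ainsert w p e)"
  shows "P n w"
  using assms(1)
proof (induction n arbitrary: w)
  case 0
  thus ?case using assms(2) by (simp add: cperms_0)
next
  case (Suc m)
  obtain w' p e where "w' \<in> cperms r m" "1 \<le> p" "p \<le> Suc m" "e < r" "w = ainsert w' p e"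
    using cperms_Suc_ainsertE[OF Suc.prems] .
  thus ?case using Suc.IH assms(3) by blast
qed

lemma binsert_cperms:
  assumes u: "u \<in> cperms r m" and p: "1 \<le> p" "p \<le> Suc m" and e: "e < r" and r: "0 < r"
  shows "binsert r u p e \<in> cperms r (Suc m)"
proof -
  have lu: "length u = m" using u by (rule cperms_length)
  define L where "L = map fst u @ [Suc m]"
  have L: "length L = Suc m" "distinct L" "set L = {1..Suc m}"
    using u by (auto simp: cperms_iff L_def)
  have "map fst (binsert r u p e) = (if p = Suc m then L else L[m := L!(p-1), p-1 := L!m])"
    using p lu by (auto simp: binsert_def map_update L_def nth_append)
  hence "distinct (map fst (binsert r u p e)) \<and> set (map fst (binsert r u p e)) = {1..Suc m}"
    using L p by auto
  moreover have "\<forall>i<Suc m. snd (binsert r u p e ! i) < r"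
    using p r cperms_colour_less[OF u] by (auto simp: nth_binsert lu cneg_less)
  ultimately show ?thesis by (simp add: cperms_iff lu)
qed

lemma bcode_binsert:
  assumes u: "u \<in> cperms r m" and p: "1 \<le> p" "p \<le> Suc m" and e: "e < r" and r: "0 < r"
  shows "bcode r (binsert r u p e) = bcode r u @ [(p, e)]"
proof -
  have lu: "length u = m" using u by (rule cperms_length)
  have "posof (Suc m) (binsert r u p e) = p - 1"
    by (rule posof_cperms[OF binsert_cperms[OF u p e r]]) (use p in \<open>auto simp: nth_binsert lu\<close>)
  moreover have "snd (binsert r u p e ! (p-1)) = cneg r e"
    using p lu by (simp add: nth_binsert)
  moreover have "take m (rtransp r (binsert r u p e) p e (Suc m)) = u" if "p < Suc m"
  proof (rule nth_equalityI)
    fix i assume "i < length (take m (rtransp r (binsert r u p e) p e (Suc m)))"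
    hence "i < m" by (simp add: rtransp_def lu)
    thus "take m (rtransp r (binsert r u p e) p e (Suc m)) ! i = u ! i"
      using that p mod_add_cneg_cancel[OF r, of "snd (u!(p-1))" e 0]
        mod_less[OF cperms_colour_less[OF u, of "p-1"]]
      by (auto simp: rtransp_def nth_list_update lu nth_binsert)
  qed (simp add: rtransp_def lu)
  moreover have "take m (binsert r u (Suc m) e) = u" using lu by (simp add: binsert_def)
  ultimately show ?thesis
    using p cneg_cneg[OF e] unfolding bcode_def length_binsert lu
    by (simp add: Let_def lu[symmetric] del: bcode_aux.simps(1))
qed

lemma cperms_Suc_binsertE:
  assumes u: "u \<in> cperms r (Suc m)" and r: "0 < r"
  obtains u' p e where "u' \<in> cperms r m" "1 \<le> p" "p \<le> Suc m" "e < r" "u = binsert r u' p e"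
proof -
  obtain q where q: "q < Suc m" "fst (u!q) = Suc m"
    using cperms_value_exists[OF u, of "Suc m"] by auto
  have lu: "length u = Suc m" using u by (rule cperms_length)
  define z where "z = snd (u!q)"
  have z: "z < r" using cperms_colour_less[OF u q(1)] by (simp add: z_def)
  define u' where "u' = (take m u)[q := (fst (u!m), (snd (u!m) + z) mod r)]"
  have lu': "length u' = m" using lu by (simp add: u'_def)
  define L where "L = map fst u"
  define S where "S = L[q := L!m, m := L!q]"
  have L: "length L = Suc m" "distinct L" "set L = {1..Suc m}"
    using u by (auto simp: cperms_iff L_def)
  have "S ! m = Suc m" "length S = Suc m" using q L by (simp_all add: S_def L_def)
  hence S_split: "S = take m S @ [Suc m]" by (metis lessI take_Suc_conv_app_nth take_all order_refl)
  have "distinct S" "set S = {1..Suc m}" using q L by (simp_all add: S_def distinct_swap set_swap)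
  hence S: "distinct (take m S @ [Suc m])" "set (take m S @ [Suc m]) = {1..Suc m}"
    using S_split by simp_all
  have "map fst u' = take m S"
    using q lu by (cases "q = m")
      (simp_all add: u'_def S_def L_def map_update take_map take_update_swap nth_append
        list_update_beyond)
  moreover have "distinct (take m S)" "Suc m \<notin> set (take m S)"
    "insert (Suc m) (set (take m S)) = insert (Suc m) {1..m}"
    using S by (auto simp: atLeastAtMostSuc_conv)
  moreover have "\<forall>i<m. snd (u'!i) < r"
  proof (intro allI impI)
    fix i assume "i < m"
    hence "u' ! i = (if i = q then (fst (u!m), (snd (u!m) + z) mod r) else u ! i)"
      using lu by (simp add: u'_def nth_list_update)
    thus "snd (u'!i) < r" using cperms_colour_less[OF u] r \<open>i < m\<close> by simp
  qed
  ultimately have U': "u' \<in> cperms r m" using lu' by (simp add: cperms_iff insert_ident)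
  have "binsert r u' (Suc q) (cneg r z) = u"
  proof (rule nth_equalityI)
    fix i assume "i < length (binsert r u' (Suc q) (cneg r z))"
    thus "binsert r u' (Suc q) (cneg r z) ! i = u ! i"
      using q lu lu' cneg_cneg[OF z] mod_add_cneg_cancel[OF r, of "snd (u!m)" z 0]
        cperms_colour_less[OF u, of m]
      by (cases "q = m") (auto simp: nth_binsert u'_def nth_list_update prod_eq_iff z_def)
  qed (simp add: lu lu')
  thus ?thesis using that[OF U', of "Suc q" "cneg r z"] q cneg_less[OF r] by simp
qed

locale binsert_step =
  fixes r m :: nat and u :: cword and p e :: nat
  assumes u: "u \<in> cperms r m" and p: "1 \<le> p" "p \<le> Suc m" and e: "e < r" and r: "0 < r"
begin

abbreviation U :: cword where "U \<equiv> binsert r u p e"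

lemma U_cperms: "U \<in> cperms r (Suc m)"
  by (rule binsert_cperms[OF u p e r])

lemma nth_U: "i < Suc m \<Longrightarrow> U ! i = (if i = p - 1 then (Suc m, cneg r e)
     else if i = m then (fst (u!(p-1)), (snd (u!(p-1)) + e) mod r) else u ! i)"
  using p cperms_length[OF u] by (simp add: nth_binsert)

lemma U_unchanged: "x \<in> {1..m} \<Longrightarrow> x \<noteq> p \<Longrightarrow> U ! (x - 1) = u ! (x - 1)"
  using nth_U[of "x - 1"] p by auto

lemma U_at_p: "U ! (p - 1) = (Suc m, cneg r e)"
  using nth_U[of "p - 1"] p by simp

lemma U_at_top: "p \<le> m \<Longrightarrow> U ! m = (fst (u!(p-1)), (snd (u!(p-1)) + e) mod r)"
  using nth_U[of m] p by simp

end

section \<open>The bijection \<open>phi\<close>\<close>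

lemma bcode_inj_on:
  assumes r: "0 < r"
  shows "inj_on (bcode r) (cperms r n)"
proof (induction n)
  case 0
  show ?case by (rule inj_onI) (simp add: cperms_0)
next
  case (Suc m)
  show ?case
  proof (rule inj_onI)
    fix u1 u2 assume u1: "u1 \<in> cperms r (Suc m)" and u2: "u2 \<in> cperms r (Suc m)"
      and eq: "bcode r u1 = bcode r u2"
    obtain a p e where a: "a \<in> cperms r m" "1 \<le> p" "p \<le> Suc m" "e < r" "u1 = binsert r a p e"
      using cperms_Suc_binsertE[OF u1 r] .
    obtain b p' e' where b: "b \<in> cperms r m" "1 \<le> p'" "p' \<le> Suc m" "e' < r" "u2 = binsert r b p' e'"
      using cperms_Suc_binsertE[OF u2 r] .
    have "bcode r a @ [(p, e)] = bcode r b @ [(p', e')]"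
      using eq a b bcode_binsert[OF a(1-4) r] bcode_binsert[OF b(1-4) r] by simp
    thus "u1 = u2" using Suc.IH a b by (auto dest: inj_onD)
  qed
qed

lemma bcode_eq_acode_exists:
  assumes r: "0 < r"
  shows "w \<in> cperms r n \<Longrightarrow> \<exists>u \<in> cperms r n. bcode r u = acode w"
proof (induction rule: cperms_ainsert_induct)
  case Nil
  show ?case by (auto simp: cperms_0 acode_def bcode_def)
next
  case (ainsert m w p e)
  then obtain u where "u \<in> cperms r m" "bcode r u = acode w" by blast
  thus ?case
    using binsert_cperms[of u r m p e] bcode_binsert[of u r m p e] acode_ainsert[of w r m p e]
      ainsert.hyps r by auto
qed

lemma phi_spec:
  assumes "0 < r" and "w \<in> cperms r n"
  shows "phi r n w \<in> cperms r n" and "bcode r (phi r n w) = acode w"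
proof -
  obtain u where "u \<in> cperms r n" "bcode r u = acode w"
    using bcode_eq_acode_exists[OF assms] by blast
  hence "\<exists>!u. u \<in> cperms r n \<and> bcode r u = acode w"
    by (intro ex1I[of _ u]) (auto intro: inj_onD[OF bcode_inj_on[OF assms(1)]])
  from theI'[OF this] show "phi r n w \<in> cperms r n" "bcode r (phi r n w) = acode w"
    unfolding phi_def by simp_all
qed

lemma phi_ainsert:
  assumes w: "w \<in> cperms r m" and p: "1 \<le> p" "p \<le> Suc m" and e: "e < r" and r: "0 < r"
  shows "phi r (Suc m) (ainsert w p e) = binsert r (phi r m w) p e"
proof -
  let ?u = "binsert r (phi r m w) p e"
  have u: "?u \<in> cperms r (Suc m)" using binsert_cperms[OF phi_spec(1)[OF r w] p e r] .
  have "bcode r ?u = acode (ainsert w p e)"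
    using bcode_binsert[OF phi_spec(1)[OF r w] p e r] acode_ainsert[OF w p e] phi_spec(2)[OF r w]
    by simp
  thus ?thesis
    using phi_spec[OF r ainsert_cperms[OF w p e]] inj_onD[OF bcode_inj_on[OF r, of "Suc m"] _ _ u]
    by simp
qed

section \<open>Minima and maxima along the word\<close>

lemma cperms_values_less:
  assumes "w \<in> cperms r m" and "x \<in> set w"
  shows "fst x < Suc m"
proof -
  have "fst x \<in> set (map fst w)" using assms(2) by simp
  thus ?thesis using assms(1) by (simp add: cperms_iff)
qed

lemma Rmil_Nil [simp]: "Rmil t [] = {}"
  by (simp add: Rmil_def)

lemma Rmil_Cons:
  "Rmil t (x # xs) =
     (if snd x = t \<and> (\<forall>y\<in>set xs. fst x < fst y) then insert (fst x) (Rmil t xs) else Rmil t xs)"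
proof -
  have "Rmil t (x # xs) = {fst x | _::unit. snd x = t \<and> (\<forall>y\<in>set xs. fst x < fst y)} \<union> Rmil t xs"
  proof (intro set_eqI iffI)
    fix v assume "v \<in> Rmil t (x # xs)"
    then obtain i where i: "v = fst ((x # xs) ! i)" "i < Suc (length xs)" "snd ((x # xs) ! i) = t"
      "\<forall>j. i < j \<and> j < Suc (length xs) \<longrightarrow> fst ((x # xs) ! i) < fst ((x # xs) ! j)"
      unfolding Rmil_def by auto
    show "v \<in> {fst x | _::unit. snd x = t \<and> (\<forall>y\<in>set xs. fst x < fst y)} \<union> Rmil t xs"
    proof (cases i)
      case 0
      with i show ?thesis by (fastforce simp: in_set_conv_nth)
    next
      case (Suc k)
      with i have "v \<in> Rmil t xs" unfolding Rmil_def by (fastforce intro!: exI[of _ k])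
      thus ?thesis by simp
    qed
  next
    fix v assume "v \<in> {fst x | _::unit. snd x = t \<and> (\<forall>y\<in>set xs. fst x < fst y)} \<union> Rmil t xs"
    thus "v \<in> Rmil t (x # xs)"
    proof
      assume "v \<in> {fst x | _::unit. snd x = t \<and> (\<forall>y\<in>set xs. fst x < fst y)}"
      thus ?thesis unfolding Rmil_def
        by (auto intro!: exI[of _ 0] simp: nth_Cons' Ball_set_list_all list_all_length)
    next
      assume "v \<in> Rmil t xs"
      then obtain k where k: "v = fst (xs ! k)" "k < length xs" "snd (xs ! k) = t"
        "\<forall>j. k < j \<and> j < length xs \<longrightarrow> fst (xs ! k) < fst (xs ! j)"
        unfolding Rmil_def by auto
      show ?thesis unfolding Rmil_def
      proof (intro CollectI exI[of _ "Suc k"] conjI allI impI)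
        fix j assume "Suc k < j \<and> j < length (x # xs)"
        thus "fst ((x # xs) ! Suc k) < fst ((x # xs) ! j)" using k(4) by (cases j) auto
      qed (use k in auto)
    qed
  qed
  thus ?thesis by auto
qed

lemma Rmil_insert_largest:
  assumes "\<forall>y\<in>set (xs @ ys). fst y < N"
  shows "Rmil t (xs @ (N, e) # ys) = Rmil t (xs @ ys) \<union> (if ys = [] \<and> e = t then {N} else {})"
  using assms
proof (induction xs)
  case Nil
  have "(\<forall>y\<in>set ys. N < fst y) \<longleftrightarrow> ys = []" using Nil by (cases ys) auto
  thus ?case by (auto simp: Rmil_Cons)
next
  case (Cons x xs)
  have "(\<forall>y\<in>set (xs @ (N, e) # ys). fst x < fst y) \<longleftrightarrow> (\<forall>y\<in>set (xs @ ys). fst x < fst y)"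
    using Cons.prems by auto
  thus ?case using Cons by (auto simp: Rmil_Cons)
qed

lemma Lmil_eq_Rmil_rev: "Lmil t w = Rmil t (rev w)"
proof (intro set_eqI iffI)
  fix v assume "v \<in> Lmil t w"
  then obtain i where i: "v = fst (w ! i)" "i < length w" "snd (w ! i) = t"
    "\<forall>j<i. fst (w ! i) < fst (w ! j)" unfolding Lmil_def by auto
  show "v \<in> Rmil t (rev w)" unfolding Rmil_def
  proof (intro CollectI exI[of _ "length w - Suc i"] conjI allI impI)
    fix j assume j: "length w - Suc i < j \<and> j < length (rev w)"
    hence "length w - Suc j < i" by auto
    thus "fst (rev w ! (length w - Suc i)) < fst (rev w ! j)"
      using i j by (simp add: rev_nth)
  qed (use i in \<open>auto simp: rev_nth\<close>)
next
  fix v assume "v \<in> Rmil t (rev w)"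
  then obtain i where i: "v = fst (rev w ! i)" "i < length w" "snd (rev w ! i) = t"
    "\<forall>j. i < j \<and> j < length w \<longrightarrow> fst (rev w ! i) < fst (rev w ! j)"
    unfolding Rmil_def by auto
  show "v \<in> Lmil t w" unfolding Lmil_def
  proof (intro CollectI exI[of _ "length w - Suc i"] conjI allI impI)
    fix j assume j: "j < length w - Suc i"
    hence "i < length w - Suc j" by auto
    thus "fst (w ! (length w - Suc i)) < fst (w ! j)"
      using i(2,4) j spec[OF i(4), of "length w - Suc j"] by (simp add: rev_nth)
  qed (use i in \<open>auto simp: rev_nth\<close>)
qed

lemma Rmil_ainsert:
  assumes w: "w \<in> cperms r m" and p: "1 \<le> p" "p \<le> Suc m"
  shows "Rmil t (ainsert w p e) = Rmil t w \<union> (if p = Suc m \<and> e = t then {Suc m} else {})"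
proof -
  have "drop (p - 1) w = [] \<longleftrightarrow> p = Suc m" using p cperms_length[OF w] by auto
  moreover have "\<forall>y\<in>set (take (p - 1) w @ drop (p - 1) w). fst y < Suc m"
    using cperms_values_less[OF w] by simp
  ultimately show ?thesis
    unfolding ainsert_def cperms_length[OF w] by (simp add: Rmil_insert_largest)
qed

lemma Lmil_ainsert:
  assumes w: "w \<in> cperms r m" and p: "1 \<le> p" "p \<le> Suc m"
  shows "Lmil t (ainsert w p e) = Lmil t w \<union> (if p = 1 \<and> e = t then {Suc m} else {})"
proof -
  have split: "rev (drop (p - 1) w) @ rev (take (p - 1) w) = rev w"
    by (metis append_take_drop_id rev_append)
  have "\<forall>y\<in>set (rev (drop (p - 1) w) @ rev (take (p - 1) w)). fst y < Suc m"
    using cperms_values_less[OF w] by (auto dest: in_set_takeD in_set_dropD)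
  hence "Lmil t (ainsert w p e) =
      Rmil t (rev w) \<union> (if rev (take (p - 1) w) = [] \<and> e = t then {Suc m} else {})"
    unfolding Lmil_eq_Rmil_rev ainsert_def cperms_length[OF w]
    by (simp only: rev_append rev.simps append_assoc append.simps Rmil_insert_largest split)
  moreover have "rev (take (p - 1) w) = [] \<longleftrightarrow> p = 1" using p cperms_length[OF w] by auto
  ultimately show ?thesis by (simp add: Lmil_eq_Rmil_rev)
qed

definition lr_maxima :: "nat \<Rightarrow> cword \<Rightarrow> (nat \<times> nat) set" where
  "lr_maxima t w = {(i, fst (w ! i)) | i. i < length w \<and> snd (w ! i) = t \<and>
                      (\<forall>j < i. fst (w ! j) < fst (w ! i))}"

lemma Lmal_eq_image: "Lmal t w = snd ` lr_maxima t w"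
  unfolding Lmal_def lr_maxima_def by (auto simp: image_def)

lemma Lmap_eq_image: "Lmap t w = (\<lambda>x. fst x + 1) ` lr_maxima t w"
  unfolding Lmap_def lr_maxima_def by (auto simp: image_def)

lemma lr_maxima_largest_at:
  assumes W: "W \<in> cperms r (Suc m)" and q: "q < Suc m" "q \<le> length w"
    and Wq: "W ! q = (Suc m, c)" and prefix: "\<And>i. i < q \<Longrightarrow> W ! i = w ! i"
  shows "lr_maxima t W = {x \<in> lr_maxima t w. fst x < q} \<union> (if c = t then {(q, Suc m)} else {})"
proof (intro set_eqI iffI)
  have lW: "length W = Suc m" using W by (rule cperms_length)
  fix x assume "x \<in> lr_maxima t W"
  then obtain i where i: "x = (i, fst (W!i))" "i < Suc m" "snd (W!i) = t"
    "\<forall>j<i. fst (W!j) < fst (W!i)" unfolding lr_maxima_def lW by blast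
  have "\<not> q < i" using i(4) cperms_value_range[OF W i(2)] Wq by force
  hence "i < q \<or> i = q" by linarith
  thus "x \<in> {x \<in> lr_maxima t w. fst x < q} \<union> (if c = t then {(q, Suc m)} else {})"
  proof
    assume "i < q"
    hence "x \<in> lr_maxima t w" using i prefix q unfolding lr_maxima_def by (auto intro!: exI[of _ i])
    thus ?thesis using i \<open>i < q\<close> by simp
  qed (use i Wq in simp)
next
  have lW: "length W = Suc m" using W by (rule cperms_length)
  fix x assume x: "x \<in> {x \<in> lr_maxima t w. fst x < q} \<union> (if c = t then {(q, Suc m)} else {})"
  show "x \<in> lr_maxima t W"
  proof (cases "x \<in> lr_maxima t w \<and> fst x < q")
    case True
    thus ?thesis using prefix q unfolding lr_maxima_def lW by (auto intro!: exI[of _ "fst x"])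
  next
    case False
    hence x: "c = t" "x = (q, Suc m)" using x by (auto split: if_splits)
    have "fst (W!j) < Suc m" if "j < q" for j
      using cperms_value_range[OF W, of j] cperms_value_inject[OF W, of j q] that q Wq by fastforce
    thus ?thesis unfolding lr_maxima_def lW using x q Wq by (auto intro!: exI[of _ q])
  qed
qed

lemma lr_maxima_ainsert:
  assumes w: "w \<in> cperms r m" and p: "1 \<le> p" "p \<le> Suc m" and e: "e < r"
  shows "lr_maxima t (ainsert w p e) =
           {x \<in> lr_maxima t w. fst x < p - 1} \<union> (if e = t then {(p - 1, Suc m)} else {})"
  using cperms_length[OF w] p
  by (intro lr_maxima_largest_at[OF ainsert_cperms[OF w p e]]) (auto simp: nth_ainsert)

lemma lr_maxima_binsert:
  assumes u: "u \<in> cperms r m" and p: "1 \<le> p" "p \<le> Suc m" and e: "e < r" and r: "0 < r"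
  shows "lr_maxima t (binsert r u p e) =
           {x \<in> lr_maxima t u. fst x < p - 1} \<union> (if cneg r e = t then {(p - 1, Suc m)} else {})"
  using cperms_length[OF u] p
  by (intro lr_maxima_largest_at[OF binsert_cperms[OF u p e r]]) (auto simp: nth_binsert)

section \<open>Cycles\<close>

definition orb :: "('a \<Rightarrow> 'a) \<Rightarrow> 'a \<Rightarrow> 'a set" where
  "orb f k = range (\<lambda>i. (f ^^ i) k)"

lemma funpow_in: "f ` S \<subseteq> S \<Longrightarrow> a \<in> S \<Longrightarrow> (f ^^ i) a \<in> S"
  by (induction i) auto

lemma orb_self: "k \<in> orb f k"
  unfolding orb_def using rangeI[of "\<lambda>i. (f ^^ i) k" 0] by simp

lemma orb_closed:
  assumes "x \<in> orb f k"
  shows "f x \<in> orb f k"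
proof -
  obtain i where "x = (f ^^ i) k" using assms by (auto simp: orb_def)
  hence "f x = (f ^^ Suc i) k" by simp
  thus ?thesis unfolding orb_def by (rule range_eqI)
qed

lemma orb_subset: "f ` S \<subseteq> S \<Longrightarrow> k \<in> S \<Longrightarrow> orb f k \<subseteq> S"
  using funpow_in[of f S k] unfolding orb_def by auto

lemma orb_induct [consumes 1, case_names base step]:
  assumes "x \<in> orb f k" and "P k" and "\<And>y. y \<in> orb f k \<Longrightarrow> P y \<Longrightarrow> P (f y)"
  shows "P x"
proof -
  have "P ((f ^^ i) k) \<and> (f ^^ i) k \<in> orb f k" for i
    by (induction i) (use assms(2,3) orb_self orb_closed in auto)
  thus ?thesis using assms(1) unfolding orb_def by blast
qed

lemma orb_trans:
  assumes "y \<in> orb f k"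
  shows "orb f y \<subseteq> orb f k"
proof
  fix x assume "x \<in> orb f y"
  thus "x \<in> orb f k" by (induction rule: orb_induct) (use assms orb_closed in auto)
qed

lemma orb_cong:
  assumes "\<And>x. x \<in> S \<Longrightarrow> g x = f x" and "f ` S \<subseteq> S" and "k \<in> S"
  shows "orb g k = orb f k"
proof -
  have "(g ^^ i) k = (f ^^ i) k" for i
    by (induction i) (use assms funpow_in[OF assms(2,3)] in auto)
  thus ?thesis unfolding orb_def by simp
qed

lemma funpow_returns:
  assumes "finite S" and "inj_on f S" and "f ` S \<subseteq> S" and "x \<in> S"
  obtains M where "0 < M" "(f ^^ M) x = x"
proof -
  have "\<not> inj_on (\<lambda>i. (f ^^ i) x) {0..card S}"
  proof
    assume "inj_on (\<lambda>i. (f ^^ i) x) {0..card S}"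
    moreover have "(\<lambda>i. (f ^^ i) x) ` {0..card S} \<subseteq> S" using funpow_in[OF assms(3,4)] by auto
    ultimately have "card {0..card S} \<le> card S" using assms(1) by (metis card_inj_on_le)
    thus False by simp
  qed
  then obtain i j where "i \<noteq> j" "(f ^^ i) x = (f ^^ j) x"
    unfolding inj_on_def by blast
  then obtain a b where ab: "a < b" "(f ^^ a) x = (f ^^ b) x"
    by (metis linorder_neqE_nat)
  have "(f ^^ (a - i)) x = (f ^^ (b - i)) x" if "i \<le> a" for i
    using that
  proof (induction i)
    case (Suc i)
    have "a - i = Suc (a - Suc i)" "b - i = Suc (b - Suc i)" using Suc.prems ab(1) by arith+
    hence "f ((f ^^ (a - Suc i)) x) = f ((f ^^ (b - Suc i)) x)" using Suc by simp
    thus ?case using assms(2) funpow_in[OF assms(3,4)] by (auto dest: inj_onD)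
  qed (use ab in simp)
  from this[of a] show ?thesis using that[of "b - a"] ab(1) by simp
qed

lemma orb_insert_after:
  assumes fS: "f ` S \<subseteq> S" and k: "k \<in> S" and p: "p \<in> S" and N: "N \<notin> S"
    and g: "\<And>x. x \<in> S \<Longrightarrow> x \<noteq> p \<Longrightarrow> g x = f x" and gp: "g p = N" and gN: "g N = f p"
  shows "orb g k = orb f k \<union> (if p \<in> orb f k then {N} else {})"
proof
  have sub: "orb f k \<subseteq> S" by (rule orb_subset[OF fS k])
  show "orb g k \<subseteq> orb f k \<union> (if p \<in> orb f k then {N} else {})"
  proof
    fix x assume "x \<in> orb g k"
    thus "x \<in> orb f k \<union> (if p \<in> orb f k then {N} else {})"
    proof (induction rule: orb_induct)
      case base
      show ?case using orb_self[of k f] by simp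
    next
      case (step y)
      thus ?case using g[of y] gp gN sub orb_closed[of y f k] orb_closed[of p f k]
        by (cases "y = p") (auto split: if_splits)
    qed
  qed
next
  have sub: "orb f k \<subseteq> S" by (rule orb_subset[OF fS k])
  have fg: "orb f k \<subseteq> orb g k"
  proof
    fix x assume "x \<in> orb f k"
    thus "x \<in> orb g k"
    proof (induction rule: orb_induct)
      case base
      show ?case by (rule orb_self)
    next
      case (step y)
      show ?case
      proof (cases "y = p")
        case True
        thus ?thesis using orb_closed[OF orb_closed[OF step(2)]] gp gN by simp
      next
        case False
        thus ?thesis using g[of y] sub step orb_closed[of y g k] by auto
      qed
    qed
  qed
  moreover have "p \<in> orb f k \<Longrightarrow> N \<in> orb g k"
    using fg orb_closed[of p g k] gp by auto
  ultimately show "orb f k \<union> (if p \<in> orb f k then {N} else {}) \<subseteq> orb g k" by auto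
qed

lemma cycle_of_eq_orb: "cycle_of w k = orb (bperm w) k"
  by (auto simp: cycle_of_def orb_def)

lemma bperm_cperms:
  assumes U: "U \<in> cperms r n"
  shows "inj_on (bperm U) {1..n}" and "bperm U ` {1..n} \<subseteq> {1..n}"
proof -
  show "inj_on (bperm U) {1..n}"
  proof (rule inj_onI)
    fix x y assume xy: "x \<in> {1..n}" "y \<in> {1..n}" "bperm U x = bperm U y"
    moreover have "x - 1 < n" "y - 1 < n" using xy by auto
    ultimately have "x - 1 = y - 1" using cperms_value_inject[OF U] by (simp add: bperm_def)
    thus "x = y" using xy by auto
  qed
  show "bperm U ` {1..n} \<subseteq> {1..n}"
    using cperms_value_range[OF U] by (auto simp: bperm_def)
qed

definition colour_sum :: "cword \<Rightarrow> nat set \<Rightarrow> nat" where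
  "colour_sum w C = (\<Sum>i\<in>C. snd (w ! (i - 1)))"

context binsert_step
begin

lemma cycle_of_binsert:
  assumes k: "k \<in> {1..m}"
  shows "cycle_of U k = cycle_of u k \<union> (if p \<in> cycle_of u k then {Suc m} else {})"
proof -
  have fS: "bperm u ` {1..m} \<subseteq> {1..m}" by (rule bperm_cperms(2)[OF u])
  have g: "bperm U x = bperm u x" if "x \<in> {1..m}" "x \<noteq> p" for x
    using U_unchanged[OF that] by (simp add: bperm_def)
  show ?thesis
  proof (cases "p = Suc m")
    case True
    hence "p \<notin> cycle_of u k" using orb_subset[OF fS k] by (auto simp: cycle_of_eq_orb)
    thus ?thesis using orb_cong[OF g fS k] True by (simp add: cycle_of_eq_orb)
  next
    case False
    hence "p \<in> {1..m}" using p by simp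
    moreover have "bperm U p = Suc m" using U_at_p by (simp add: bperm_def)
    moreover have "bperm U (Suc m) = bperm u p" using U_at_top False p by (simp add: bperm_def)
    ultimately show ?thesis
      unfolding cycle_of_eq_orb by (intro orb_insert_after[OF fS k]) (use g in auto)
  qed
qed

lemma colour_sum_cycle_of_binsert:
  assumes k: "k \<in> {1..m}"
  shows "colour_sum U (cycle_of U k) mod r = colour_sum u (cycle_of u k) mod r"
proof -
  let ?C = "cycle_of u k"
  have sub: "?C \<subseteq> {1..m}"
    using orb_subset[OF bperm_cperms(2)[OF u] k] by (simp add: cycle_of_eq_orb)
  hence fin: "finite ?C" by (rule finite_subset) simp
  have same: "colour_sum U (?C - {p}) = colour_sum u (?C - {p})"
    unfolding colour_sum_def by (rule sum.cong) (use sub U_unchanged in auto)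
  show ?thesis
  proof (cases "p \<in> ?C")
    case False
    hence "colour_sum U ?C = colour_sum u ?C" using same by simp
    thus ?thesis using cycle_of_binsert[OF k] False by simp
  next
    case True
    hence pm: "p \<le> m" using sub by auto
    have "Suc m \<notin> ?C" using sub by auto
    hence "colour_sum U (cycle_of U k) = snd (U ! m) + colour_sum U ?C"
      using cycle_of_binsert[OF k] True fin by (simp add: colour_sum_def)
    also have "colour_sum U ?C = snd (U ! (p - 1)) + colour_sum U (?C - {p})"
      using True fin by (simp add: colour_sum_def sum.remove)
    \<comment> \<open>the new colours \<open>-e\<close> at \<open>p\<close> and \<open>+e\<close> at \<open>Suc m\<close> cancel modulo \<open>r\<close>\<close>
    also have "snd (U ! m) + (snd (U ! (p - 1)) + colour_sum U (?C - {p})) =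
        (snd (u ! (p - 1)) + e) mod r + (cneg r e + colour_sum u (?C - {p}))"
      using U_at_top[OF pm] U_at_p same by simp
    finally have "colour_sum U (cycle_of U k) mod r =
        (snd (u ! (p - 1)) + colour_sum u (?C - {p})) mod r"
      using mod_add_cneg_cancel[OF r] by simp
    also have "snd (u ! (p - 1)) + colour_sum u (?C - {p}) = colour_sum u ?C"
      using True fin by (simp add: colour_sum_def sum.remove)
    finally show ?thesis .
  qed
qed

lemma Min_cycle_of_binsert:
  assumes k: "k \<in> {1..m}"
  shows "Min (cycle_of U k) = Min (cycle_of u k)"
proof -
  have sub: "cycle_of u k \<subseteq> {1..m}"
    using orb_subset[OF bperm_cperms(2)[OF u] k] by (simp add: cycle_of_eq_orb)
  have fin: "finite (cycle_of u k)" and ne: "cycle_of u k \<noteq> {}"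
    using finite_subset[OF sub] orb_self[of k] by (auto simp: cycle_of_eq_orb)
  hence "Min (cycle_of u k) \<le> m" using sub Min_in by fastforce
  thus ?thesis using cycle_of_binsert[OF k] fin ne by simp
qed

lemma cycle_of_binsert_top:
  "cycle_of U (Suc m) = (if p = Suc m then {Suc m} else cycle_of U p)"
proof (cases "p = Suc m")
  case True
  have fixed: "bperm U (Suc m) = Suc m" using U_at_p True by (simp add: bperm_def)
  have "orb (bperm U) (Suc m) \<subseteq> {Suc m}"
  proof
    fix x assume "x \<in> orb (bperm U) (Suc m)"
    thus "x \<in> {Suc m}" by (induction rule: orb_induct) (simp_all add: fixed)
  qed
  hence "orb (bperm U) (Suc m) = {Suc m}" using orb_self[of "Suc m" "bperm U"] by auto
  thus ?thesis using True by (simp add: cycle_of_eq_orb)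
next
  case False
  have gp: "bperm U p = Suc m" using U_at_p by (simp add: bperm_def)
  obtain M where M: "0 < M" "(bperm U ^^ M) p = p"
    by (rule funpow_returns[OF finite_atLeastAtMost bperm_cperms[OF U_cperms], of p])
      (use p in simp)
  have "(bperm U ^^ (M - 1)) (Suc m) = (bperm U ^^ Suc (M - 1)) p"
    by (simp only: funpow_Suc_right o_apply gp)
  hence "(bperm U ^^ (M - 1)) (Suc m) = p" using M by simp
  hence "p \<in> orb (bperm U) (Suc m)" unfolding orb_def by (rule range_eqI[OF sym])
  moreover have "Suc m \<in> orb (bperm U) p" using gp orb_closed[OF orb_self, of "bperm U" p] by simp
  ultimately have "orb (bperm U) (Suc m) = orb (bperm U) p"
    by (intro equalityI orb_trans)
  thus ?thesis using False by (simp add: cycle_of_eq_orb)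
qed

lemma Cyc_binsert:
  "Cyc r c U = Cyc r c u \<union> (if p = Suc m \<and> cneg r e = c then {Suc m} else {})"
proof -
  have Cyc_image: "Cyc r c w = (\<lambda>k. Min (cycle_of w k)) `
      {k \<in> {1..length w}. colour_sum w (cycle_of w k) mod r = c}" for w
    unfolding Cyc_def colour_sum_def by auto
  define Q where "Q k \<longleftrightarrow> colour_sum U (cycle_of U k) mod r = c" for k
  have "{k \<in> {1..Suc m}. Q k} = {k \<in> {1..m}. Q k} \<union> (if Q (Suc m) then {Suc m} else {})"
    by (auto simp: le_Suc_eq)
  moreover have "(\<lambda>k. Min (cycle_of U k)) ` {k \<in> {1..m}. Q k} = Cyc r c u"
    unfolding Cyc_image cperms_length[OF u] Q_def
    by (rule image_cong[OF Collect_cong])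
      (use Min_cycle_of_binsert colour_sum_cycle_of_binsert in auto)
  ultimately have CU:
      "Cyc r c U = Cyc r c u \<union> (if Q (Suc m) then {Min (cycle_of U (Suc m))} else {})"
    unfolding Cyc_image[of U] cperms_length[OF U_cperms] Q_def[symmetric] by auto
  show ?thesis
  proof (cases "p = Suc m")
    case True
    hence "Q (Suc m) \<longleftrightarrow> cneg r e = c" "Min (cycle_of U (Suc m)) = Suc m"
      using cycle_of_binsert_top U_at_p cneg_less[OF r] by (simp_all add: Q_def colour_sum_def)
    thus ?thesis using CU True by simp
  next
    case False
    hence pm: "p \<in> {1..m}" using p by simp
    have "Q (Suc m) \<Longrightarrow> Min (cycle_of U (Suc m)) \<in> Cyc r c u"
      using False pm cycle_of_binsert_top Min_cycle_of_binsert colour_sum_cycle_of_binsert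
      unfolding Q_def Cyc_image cperms_length[OF u] by simp
    thus ?thesis using CU False by auto
  qed
qed

end

section \<open>Left-to-right minima along the cycle of \<open>1\<close>\<close>

inductive reach_above :: "(nat \<times> nat \<Rightarrow> nat \<times> nat) \<Rightarrow> nat \<Rightarrow> nat \<times> nat \<Rightarrow> nat \<times> nat \<Rightarrow> bool"
  for G v s where
  first: "reach_above G v s (G s)"
| step: "reach_above G v s x \<Longrightarrow> v < fst x \<Longrightarrow> reach_above G v s (G x)"

lemma reach_above_iff_funpow:
  "reach_above G v s y \<longleftrightarrow>
     (\<exists>m\<ge>1. (G ^^ m) s = y \<and> (\<forall>m'. 1 \<le> m' \<and> m' < m \<longrightarrow> v < fst ((G ^^ m') s)))"
    (is "_ \<longleftrightarrow> (\<exists>m\<ge>1. _ \<and> ?above m)")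
proof
  assume "reach_above G v s y"
  thus "\<exists>m\<ge>1. (G ^^ m) s = y \<and> ?above m"
  proof (induction rule: reach_above.induct)
    case first
    show ?case by (rule exI[of _ 1]) simp
  next
    case (step x)
    then obtain m where "1 \<le> m" "(G ^^ m) s = x" "?above m" by blast
    thus ?case using step.hyps(2) by (intro exI[of _ "Suc m"]) (auto simp: less_Suc_eq)
  qed
next
  assume "\<exists>m\<ge>1. (G ^^ m) s = y \<and> ?above m"
  then obtain m where m: "1 \<le> m" "(G ^^ m) s = y" "?above m" by blast
  have "reach_above G v s ((G ^^ Suc k) s)" if "Suc k \<le> m" for k
    using that
  proof (induction k)
    case 0
    show ?case using reach_above.first[of G v s] by simp
  next
    case (Suc k)
    have reach: "reach_above G v s ((G ^^ Suc k) s)" using Suc by simp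
    have above: "v < fst ((G ^^ Suc k) s)" using m(3) Suc.prems by (simp del: funpow.simps)
    from reach_above.step[OF reach above] show ?case by simp
  qed
  from this[of "m - 1"] show "reach_above G v s y" using m(1,2) by simp
qed

lemma reach_above_closed:
  assumes "\<And>x. fst x \<in> T \<Longrightarrow> fst (G x) \<in> T" and "fst s \<in> T" and "reach_above G v s y"
  shows "fst y \<in> T"
  using assms(3) by (induction rule: reach_above.induct) (use assms(1,2) in auto)

lemma reach_above_cong:
  assumes eq: "\<And>x. fst x \<in> T \<Longrightarrow> G x = G' x" and closed: "\<And>x. fst x \<in> T \<Longrightarrow> fst (G x) \<in> T"
    and s: "fst s \<in> T"
  shows "reach_above G v s y \<longleftrightarrow> reach_above G' v s y"
proof -
  have closed': "fst x \<in> T \<Longrightarrow> fst (G' x) \<in> T" for x using eq closed by metis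
  have "reach_above H v s y" if "reach_above K v s y" "\<And>x. fst x \<in> T \<Longrightarrow> K x = H x"
    "\<And>x. fst x \<in> T \<Longrightarrow> fst (K x) \<in> T" for H K
    using that(1)
  proof (induction rule: reach_above.induct)
    case first
    thus ?case using that(2)[OF s] reach_above.first[of H v s] by simp
  next
    case (step x)
    have "fst x \<in> T" using reach_above_closed[OF that(3) s step.hyps(1)] .
    thus ?case using that(2) reach_above.step[OF step.IH step.hyps(2)] by simp
  qed
  thus ?thesis using eq closed closed' by (metis (no_types))
qed

lemma reach_above_insert_dest:
  assumes closed: "\<And>x. fst x \<in> T \<Longrightarrow> fst (G x) \<in> T" and s: "fst s \<in> T" and N: "N \<notin> T"
    and same: "\<And>x. fst x \<in> T \<Longrightarrow> fst x \<noteq> p \<Longrightarrow> G' x = G x"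
    and to_N: "\<And>x. fst x = p \<Longrightarrow> fst (G' x) = N" and from_N: "\<And>x. fst x = p \<Longrightarrow> G' (G' x) = G x"
    and y: "reach_above G' v s y" and yN: "fst y \<noteq> N"
  shows "reach_above G v s y"
proof -
  have "(fst y \<noteq> N \<longrightarrow> reach_above G v s y) \<and> (fst y = N \<longrightarrow> reach_above G v s (G' y))"
    using y
  proof (induction rule: reach_above.induct)
    case first
    show ?case
      using same[OF s] to_N from_N closed[OF s] N reach_above.first[of G v s]
      by (cases "fst s = p") auto
  next
    case (step x)
    show ?case
    proof (cases "fst x = N")
      case True
      hence "reach_above G v s (G' x)" using step.IH by simp
      moreover have "fst (G' x) \<in> T" by (rule reach_above_closed[OF closed s calculation])
      ultimately show ?thesis using N by auto
    next
      case False
      hence x: "reach_above G v s x" using step.IH by simp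
      have "fst x \<in> T" by (rule reach_above_closed[OF closed s x])
      thus ?thesis
        using same[of x] to_N[of x] from_N[of x] closed[of x] N reach_above.step[OF x step.hyps(2)]
        by (cases "fst x = p") auto
    qed
  qed
  thus ?thesis using yN by simp
qed

lemma reach_above_insert:
  assumes closed: "\<And>x. fst x \<in> T \<Longrightarrow> fst (G x) \<in> T" and s: "fst s \<in> T"
    and same: "\<And>x. fst x \<in> T \<Longrightarrow> fst x \<noteq> p \<Longrightarrow> G' x = G x"
    and to_N: "\<And>x. fst x = p \<Longrightarrow> fst (G' x) = N" and from_N: "\<And>x. fst x = p \<Longrightarrow> G' (G' x) = G x"
    and y: "reach_above G v s y" and vN: "v < N"
  shows "reach_above G' v s y"
proof -
  have detour: "reach_above G' v s (G x)" if "fst x = p" "reach_above G' v s (G' x)" for x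
    using reach_above.step[OF that(2)] to_N[OF that(1)] from_N[OF that(1)] vN by simp
  show ?thesis
    using y
  proof (induction rule: reach_above.induct)
    case first
    show ?case using same[OF s] detour reach_above.first[of G' v s] by (cases "fst s = p") auto
  next
    case (step x)
    have "fst x \<in> T" by (rule reach_above_closed[OF closed s step.hyps(1)])
    thus ?case
      using same detour reach_above.step[OF step.IH step.hyps(2)] by (cases "fst x = p") auto
  qed
qed

lemma cact_maps_to:
  assumes u: "u \<in> cperms r n" and r: "0 < r" and x: "x \<in> {1..n} \<times> {0..<r}"
  shows "cact r u x \<in> {1..n} \<times> {0..<r}"
  using cperms_value_range[OF u, of "fst x - 1"] r x by (auto simp: cact_def)

lemma cact_inj_on:
  assumes u: "u \<in> cperms r n"
  shows "inj_on (cact r u) ({1..n} \<times> {0..<r})"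
proof (rule inj_onI)
  fix x y assume x: "x \<in> {1..n} \<times> {0..<r}" and y: "y \<in> {1..n} \<times> {0..<r}"
    and eq: "cact r u x = cact r u y"
  have "fst x - 1 = fst y - 1"
    using eq cperms_value_inject[OF u, of "fst x - 1" "fst y - 1"] x y by (auto simp: cact_def)
  hence fx: "fst x = fst y" using x y by auto
  hence "(snd (u ! (fst x - 1)) + snd x) mod r = (snd (u ! (fst x - 1)) + snd y) mod r"
    using eq by (simp add: cact_def)
  hence "snd x = snd y" using mod_add_left_cancel_less x y by auto
  thus "x = y" using fx by (simp add: prod_eq_iff)
qed

lemma Lmic_eq_reach_above:
  assumes u: "u \<in> cperms r n" and r: "0 < r" and n: "1 \<le> n"
  shows "Lmic r c u = {v. reach_above (cact r u) v (1, 0) (v, c)}"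
proof -
  define G where "G = cact r u"
  define s where "s = ((1::nat), (0::nat))"
  define R where "R = {1..n} \<times> {0..<r}"
  have sR: "s \<in> R" using n r by (simp add: s_def R_def)
  have GR: "G ` R \<subseteq> R" using cact_maps_to[OF u r] unfolding G_def R_def by blast
  obtain M where "0 < M" "(G ^^ M) s = s"
    by (rule funpow_returns[of R G s]) (use cact_inj_on[OF u] GR sR in \<open>simp_all add: R_def G_def\<close>)
  define m0 where "m0 = (LEAST m. 1 \<le> m \<and> (G ^^ m) s = s)"
  have m0: "1 \<le> m0" "(G ^^ m0) s = s"
    using LeastI[of "\<lambda>m. 1 \<le> m \<and> (G ^^ m) s = s" M] \<open>0 < M\<close> \<open>(G ^^ M) s = s\<close>
    by (auto simp: m0_def)
  have val: "1 \<le> fst ((G ^^ k) s)" for k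
    using funpow_in[OF GR sR, of k] by (auto simp: R_def)
  have "{fst ((G ^^ m) s) | m. 1 \<le> m \<and> m \<le> m0 \<and> snd ((G ^^ m) s) = c \<and>
            (\<forall>m'. 1 \<le> m' \<and> m' < m \<longrightarrow> fst ((G ^^ m) s) < fst ((G ^^ m') s))} =
        {v. \<exists>m\<ge>1. (G ^^ m) s = (v, c) \<and> (\<forall>m'. 1 \<le> m' \<and> m' < m \<longrightarrow> v < fst ((G ^^ m') s))}"
    (is "?L = ?R")
  proof (intro equalityI subsetI)
    fix v assume "v \<in> ?L"
    thus "v \<in> ?R" by (auto simp: prod_eq_iff)
  next
    fix v assume "v \<in> ?R"
    then obtain m where mm: "1 \<le> m" "(G ^^ m) s = (v, c)"
      "\<forall>m'. 1 \<le> m' \<and> m' < m \<longrightarrow> v < fst ((G ^^ m') s)" by blast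
    \<comment> \<open>the cut-off at the first return to \<open>1\<close> is automatic: nothing exceeds \<open>v\<close> there\<close>
    have "m \<le> m0"
    proof (rule ccontr)
      assume "\<not> m \<le> m0"
      hence "v < 1" using mm(3) m0 by (auto simp: s_def)
      thus False using val[of m] mm(2) by simp
    qed
    thus "v \<in> ?L" using mm by (auto intro!: exI[of _ m])
  qed
  thus ?thesis unfolding Lmic_def reach_above_iff_funpow G_def s_def m0_def Let_def .
qed

context binsert_step
begin

lemma cact_u_closed: "fst x \<in> {1..m} \<Longrightarrow> fst (cact r u x) \<in> {1..m}"
  using cperms_value_range[OF u, of "fst x - 1"] by (auto simp: cact_def)

lemma cact_U_closed: "fst x \<in> {1..Suc m} \<Longrightarrow> fst (cact r U x) \<in> {1..Suc m}"
  using cperms_value_range[OF U_cperms, of "fst x - 1"] by (auto simp: cact_def)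

lemma cact_U_unchanged: "fst x \<in> {1..m} \<Longrightarrow> fst x \<noteq> p \<Longrightarrow> cact r U x = cact r u x"
  using U_unchanged[of "fst x"] by (simp add: cact_def)

lemma cact_U_detour:
  assumes "p \<le> m" and "fst x = p"
  shows "fst (cact r U x) = Suc m" and "cact r U (cact r U x) = cact r u x"
proof -
  have Ux: "cact r U x = (Suc m, (cneg r e + snd x) mod r)"
    using U_at_p assms(2) by (simp add: cact_def)
  thus "fst (cact r U x) = Suc m" by simp
  have "cact r U (cact r U x) =
      (fst (u!(p-1)), ((snd (u!(p-1)) + e) mod r + (cneg r e + snd x) mod r) mod r)"
    unfolding Ux using U_at_top[OF assms(1)] by (simp add: cact_def)
  also have "\<dots> = cact r u x"
    using mod_add_cneg_cancel[OF r] assms(2) by (simp add: cact_def mod_add_right_eq)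
  finally show "cact r U (cact r U x) = cact r u x" .
qed

lemma top_in_Lmic_binsert_iff:
  assumes m: "1 \<le> m"
  shows "Suc m \<in> Lmic r c U \<longleftrightarrow> p = 1 \<and> cneg r e = c"
proof
  assume "Suc m \<in> Lmic r c U"
  hence reach: "reach_above (cact r U) (Suc m) (1, 0) (Suc m, c)"
    using Lmic_eq_reach_above[OF U_cperms r] by simp
  have bound: "fst x \<le> Suc m" if "reach_above (cact r U) (Suc m) (1, 0) x" for x
    using reach_above_closed[OF cact_U_closed _ that] by simp
  \<comment> \<open>no letter exceeds \<open>Suc m\<close>, so the path is a single step\<close>
  from reach have "(Suc m, c) = cact r U (1, 0)"
  proof (cases rule: reach_above.cases)
    case (step x)
    from bound[OF step(2)] step(3) show ?thesis by linarith
  qed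
  moreover have "cact r U (1, 0) = (fst (U ! 0), snd (U ! 0) mod r)" by (simp add: cact_def)
  ultimately have "(Suc m, c) = (fst (U ! 0), snd (U ! 0) mod r)" by (rule trans)
  hence U0: "fst (U ! 0) = Suc m" "c = snd (U ! 0) mod r" by (metis Pair_inject)+
  have "fst (U ! (p - 1)) = fst (U ! 0)" using U_at_p U0(1) by simp
  moreover have "p - 1 < Suc m" using p by simp
  ultimately have p0: "p - 1 = 0" using cperms_value_inject[OF U_cperms, of "p - 1" 0] by blast
  hence "U ! 0 = (Suc m, cneg r e)" using U_at_p by simp
  hence "cneg r e = c" using U0(2) cneg_less[OF r] by simp
  thus "p = 1 \<and> cneg r e = c" using p0 p by simp
next
  assume h: "p = 1 \<and> cneg r e = c"
  hence "p - 1 = 0" by simp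
  hence "U ! 0 = (Suc m, cneg r e)" using U_at_p by simp
  moreover have "cneg r e < r" by (rule cneg_less[OF r])
  ultimately have "cact r U (1, 0) = (Suc m, c)" using h by (simp add: cact_def)
  thus "Suc m \<in> Lmic r c U"
    using Lmic_eq_reach_above[OF U_cperms r] reach_above.first[of "cact r U" "Suc m" "(1, 0)"]
    by simp
qed

lemma Lmic_binsert_below:
  assumes m: "1 \<le> m" and v: "v \<noteq> Suc m"
  shows "v \<in> Lmic r c U \<longleftrightarrow> v \<in> Lmic r c u"
proof -
  have s: "fst (1::nat, 0::nat) \<in> {1..m}" using m by simp
  have "reach_above (cact r U) v (1, 0) (v, c) \<longleftrightarrow> reach_above (cact r u) v (1, 0) (v, c)"
  proof (cases "p = Suc m")
    case True
    have "cact r u x = cact r U x" if "fst x \<in> {1..m}" for x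
      using cact_U_unchanged[OF that] that True by auto
    from reach_above_cong[OF this cact_u_closed s] show ?thesis by simp
  next
    case False
    hence pm: "p \<le> m" using p by simp
    show ?thesis
    proof
      assume "reach_above (cact r U) v (1, 0) (v, c)"
      thus "reach_above (cact r u) v (1, 0) (v, c)"
        using reach_above_insert_dest[OF cact_u_closed s _ cact_U_unchanged cact_U_detour[OF pm]] v
        by simp
    next
      assume reach: "reach_above (cact r u) v (1, 0) (v, c)"
      have "v < Suc m" using reach_above_closed[OF cact_u_closed s reach] by simp
      thus "reach_above (cact r U) v (1, 0) (v, c)"
        using reach_above_insert[OF cact_u_closed s cact_U_unchanged cact_U_detour[OF pm] reach]
        by simp
    qed
  qed
  thus ?thesis using Lmic_eq_reach_above[OF U_cperms r] Lmic_eq_reach_above[OF u r m] by simp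
qed

lemma Lmic_binsert:
  assumes m: "1 \<le> m"
  shows "Lmic r c U = Lmic r c u \<union> (if p = 1 \<and> cneg r e = c then {Suc m} else {})"
proof -
  have "Suc m \<notin> Lmic r c u"
  proof
    assume "Suc m \<in> Lmic r c u"
    hence "reach_above (cact r u) (Suc m) (1, 0) (Suc m, c)"
      using Lmic_eq_reach_above[OF u r m] by simp
    from reach_above_closed[OF cact_u_closed _ this] m show False by simp
  qed
  show ?thesis
  proof (rule set_eqI)
    fix v
    show "v \<in> Lmic r c U \<longleftrightarrow> v \<in> Lmic r c u \<union> (if p = 1 \<and> cneg r e = c then {Suc m} else {})"
    proof (cases "v = Suc m")
      case True
      have "Suc m \<in> Lmic r c u \<union> (if p = 1 \<and> cneg r e = c then {Suc m} else {}) \<longleftrightarrow>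
          p = 1 \<and> cneg r e = c"
        using \<open>Suc m \<notin> Lmic r c u\<close> by simp
      thus ?thesis using top_in_Lmic_binsert_iff[OF m] True by simp
    next
      case False
      thus ?thesis using Lmic_binsert_below[OF m False] by simp
    qed
  qed
qed

end

lemma Lmic_singleton:
  assumes z: "z < r"
  shows "Lmic r c [(1, z)] = (if z = c then {1} else {})"
proof -
  have r: "0 < r" using z by simp
  define G where "G = cact r [(1, z)]"
  have L: "Lmic r c [(1, z)] = {v. reach_above G v (1, 0) (v, c)}"
    unfolding G_def by (rule Lmic_eq_reach_above[of _ r 1]) (use z in \<open>simp_all add: cperms_def\<close>)
  have G: "G x = (1, (z + snd x) mod r)" if "fst x = 1" for x
    using that by (simp add: G_def cact_def)
  have reach: "fst y = 1 \<and> (v = 0 \<or> y = (1, z))" if "reach_above G v (1, 0) y" for v y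
    using that by (induction rule: reach_above.induct) (use z G in auto)
  have "reach_above G 1 (1, 0) (1, z)"
    using reach_above.first[of G 1 "(1, 0)"] z G[of "(1, 0)"] by simp
  thus ?thesis unfolding L using reach[of _ "(_, c)"] by auto
qed

section \<open>Length\<close>

text \<open>An explicit formula for the length; \<open>pre\<close> lists the base values to the left.\<close>

fun len_stat :: "nat list \<Rightarrow> cword \<Rightarrow> nat" where
  "len_stat pre [] = 0"
| "len_stat pre (x # xs) = length (filter (\<lambda>y. fst y < fst x) xs)
     + (if 0 < snd x then 2 * length (filter (\<lambda>y. y < fst x) pre) + snd x else 0)
     + len_stat (pre @ [fst x]) xs"

lemma len_stat_prefix_cong:
  "(\<forall>x\<in>set ws. length (filter (\<lambda>y. y < fst x) pre) = length (filter (\<lambda>y. y < fst x) pre'))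
   \<Longrightarrow> len_stat pre ws = len_stat pre' ws"
proof (induction ws arbitrary: pre pre')
  case (Cons x xs)
  have "len_stat (pre @ [fst x]) xs = len_stat (pre' @ [fst x]) xs"
    by (rule Cons.IH) (use Cons.prems in auto)
  thus ?case using Cons.prems by simp
qed simp

lemma len_stat_sorted:
  "sorted_wrt (\<lambda>x y. fst x < fst y) w \<Longrightarrow> \<forall>x\<in>set w. snd x = 0 \<Longrightarrow> len_stat pre w = 0"
proof (induction w arbitrary: pre)
  case (Cons x xs)
  have "filter (\<lambda>y. fst y < fst x) xs = []" using Cons.prems(1) by (auto simp: filter_empty_conv)
  thus ?case using Cons by simp
qed simp

lemma len_stat_eq_0D:
  "len_stat pre w = 0 \<Longrightarrow> distinct (map fst w) \<Longrightarrow>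
   sorted_wrt (\<lambda>x y. fst x < fst y) w \<and> (\<forall>x\<in>set w. snd x = 0)"
proof (induction w arbitrary: pre)
  case (Cons x xs)
  have f: "filter (\<lambda>y. fst y < fst x) xs = []" and z: "snd x = 0"
    and rest: "len_stat (pre @ [fst x]) xs = 0"
    using Cons.prems(1) by (auto split: if_splits)
  have "fst x < fst y" if "y \<in> set xs" for y
    using f that Cons.prems(2) by (force simp: filter_empty_conv)
  thus ?case using Cons.IH[OF rest] Cons.prems(2) z by simp
qed simp

lemma len_stat_insert_largest:
  "\<forall>v\<in>set pre. v < N \<Longrightarrow> \<forall>x\<in>set (xs @ ys). fst x < N \<Longrightarrow>
   len_stat pre (xs @ (N, e) # ys) =
     len_stat pre (xs @ ys) + length ys + (if 0 < e then 2 * (length pre + length xs) + e else 0)"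
proof (induction xs arbitrary: pre)
  case Nil
  have "len_stat (pre @ [N]) ys = len_stat pre ys"
    by (rule len_stat_prefix_cong) (use Nil.prems in auto)
  moreover have "filter (\<lambda>y. fst y < N) ys = ys" "filter (\<lambda>y. y < N) pre = pre"
    using Nil.prems by (simp_all add: filter_id_conv)
  ultimately show ?case by simp
next
  case (Cons x xs)
  have "fst x < N" using Cons.prems by simp
  moreover have "len_stat (pre @ [fst x]) (xs @ (N, e) # ys) = len_stat (pre @ [fst x]) (xs @ ys)
      + length ys + (if 0 < e then 2 * (length (pre @ [fst x]) + length xs) + e else 0)"
    by (rule Cons.IH) (use Cons.prems calculation in auto)
  ultimately show ?case by simp
qed

definition swap_adj :: "nat \<Rightarrow> 'a list \<Rightarrow> 'a list" where
  "swap_adj j w = w[j := w ! Suc j, Suc j := w ! j]"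

lemma swap_adj_split:
  assumes "Suc j < length w"
  shows "w = take j w @ w ! j # w ! Suc j # drop (Suc (Suc j)) w"
    and "swap_adj j w = take j w @ w ! Suc j # w ! j # drop (Suc (Suc j)) w"
proof -
  show w: "w = take j w @ w ! j # w ! Suc j # drop (Suc (Suc j)) w"
    using assms by (metis Cons_nth_drop_Suc Suc_lessD append_take_drop_id)
  show "swap_adj j w = take j w @ w ! Suc j # w ! j # drop (Suc (Suc j)) w"
    by (subst (1 2 3) w) (use assms in \<open>simp add: swap_adj_def list_update_append\<close>)
qed

lemma swap_adj_swap_adj: "Suc j < length w \<Longrightarrow> swap_adj j (swap_adj j w) = w"
  by (auto intro!: nth_equalityI simp: swap_adj_def nth_list_update)

lemma length_swap_adj [simp]: "length (swap_adj j w) = length w"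
  by (simp add: swap_adj_def)

lemma nth_swap_adj:
  "Suc j < length w \<Longrightarrow> swap_adj j w ! j = w ! Suc j \<and> swap_adj j w ! Suc j = w ! j"
  by (simp add: swap_adj_def nth_list_update)

lemma len_stat_swap_adj:
  assumes "Suc j < length w" and "fst (w ! j) < fst (w ! Suc j)"
  shows "len_stat pre (swap_adj j w) + (if 0 < snd (w ! Suc j) then 2 else 0) = len_stat pre w + 1"
proof -
  have "len_stat pre (xs @ b # a # ys) + (if 0 < snd b then 2 else 0) =
      len_stat pre (xs @ a # b # ys) + 1"
    if "fst a < fst b" for xs a b ys
  proof (induction xs arbitrary: pre)
    case Nil
    have "len_stat (pre @ [fst b, fst a]) ys = len_stat (pre @ [fst a, fst b]) ys"
      by (rule len_stat_prefix_cong) auto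
    thus ?case using that by simp
  next
    case (Cons x xs)
    thus ?case by simp
  qed
  thus ?thesis using swap_adj_split[OF assms(1)] assms(2) by metis
qed

lemma swap_adj_cperms:
  assumes w: "w \<in> cperms r n" and j: "Suc j < n"
  shows "swap_adj j w \<in> cperms r n"
proof -
  have lw: "length w = n" using w by (rule cperms_length)
  define L where "L = map fst w"
  have "map fst (swap_adj j w) = swap_adj j L"
    using j lw by (simp add: swap_adj_def map_update L_def)
  moreover have "distinct L" "set L = {1..n}" "length L = n"
    using w by (auto simp: cperms_iff L_def)
  ultimately have "distinct (map fst (swap_adj j w))" "set (map fst (swap_adj j w)) = {1..n}"
    using j by (simp_all add: swap_adj_def distinct_swap set_swap)
  moreover have "\<forall>k<n. snd (swap_adj j w ! k) < r"
    using cperms_colour_less[OF w] j lw by (auto simp: swap_adj_def nth_list_update)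
  ultimately show ?thesis using lw by (simp add: cperms_iff)
qed

lemma recolour_first_cperms:
  assumes w: "w \<in> cperms r n" and n: "1 \<le> n" and c: "c < r"
  shows "w[0 := (fst (w!0), c)] \<in> cperms r n"
proof -
  have lw: "length w = n" using w by (rule cperms_length)
  have "map fst (w[0 := (fst (w!0), c)]) = map fst w"
    using n lw by (simp add: map_update list_update_same_conv)
  moreover have "\<forall>k<n. snd (w[0 := (fst (w!0), c)] ! k) < r"
    using cperms_colour_less[OF w] c n lw by (auto simp: nth_list_update)
  ultimately show ?thesis using w lw by (simp add: cperms_iff)
qed

lemma nth_cid: "k < n \<Longrightarrow> cid n ! k = (Suc k, 0)"
  by (simp add: cid_def nth_map del: upt_Suc)

lemma length_cid [simp]: "length (cid n) = n"
  by (simp add: cid_def)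

lemma cid_cperms: "0 < r \<Longrightarrow> cid n \<in> cperms r n"
proof -
  have m: "map fst (cid n) = [1..<n+1]" by (simp add: cid_def comp_def del: upt_Suc)
  have "set (map fst (cid n)) = {1..n}" "distinct (map fst (cid n))" unfolding m by auto
  moreover have "\<forall>x\<in>set (cid n). snd x = 0" by (auto simp: cid_def simp del: upt_Suc)
  ultimately show "0 < r \<Longrightarrow> ?thesis" unfolding cperms_def by auto
qed

lemma len_stat_cid: "len_stat [] (cid n) = 0"
  by (rule len_stat_sorted) (auto simp: cid_def sorted_wrt_map simp del: upt_Suc)

lemma cmul_nth:
  "k < length v \<Longrightarrow> cmul r w v ! k =
     (fst (w ! (fst (v ! k) - 1)), (snd (w ! (fst (v ! k) - 1)) + snd (v ! k)) mod r)"
  by (simp add: cmul_def split_beta)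

lemma cmul_geni:
  assumes w: "w \<in> cperms r n" and j: "Suc j < n"
  shows "cmul r w (geni n (Suc j)) = swap_adj j w"
proof (rule nth_equalityI)
  have lw: "length w = n" using w by (rule cperms_length)
  show "length (cmul r w (geni n (Suc j))) = length (swap_adj j w)"
    by (simp add: cmul_def geni_def lw)
  fix k assume "k < length (cmul r w (geni n (Suc j)))"
  hence k: "k < n" by (simp add: cmul_def geni_def)
  have "geni n (Suc j) ! k =
      (if k = Suc j then (Suc j, 0) else if k = j then (Suc (Suc j), 0) else (Suc k, 0))"
    using k j by (simp add: geni_def nth_list_update nth_cid)
  thus "cmul r w (geni n (Suc j)) ! k = swap_adj j w ! k"
    using k j lw cperms_colour_less[OF w]
    by (auto simp: cmul_nth geni_def swap_adj_def nth_list_update prod_eq_iff)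
qed

lemma cmul_gen0:
  assumes w: "w \<in> cperms r n" and n: "1 \<le> n"
  shows "cmul r w (gen0 r n) = w[0 := (fst (w!0), (snd (w!0) + 1) mod r)]"
proof (rule nth_equalityI)
  have lw: "length w = n" using w by (rule cperms_length)
  show "length (cmul r w (gen0 r n)) = length (w[0 := (fst (w!0), (snd (w!0) + 1) mod r)])"
    by (simp add: cmul_def gen0_def lw)
  fix k assume "k < length (cmul r w (gen0 r n))"
  hence k: "k < n" by (simp add: cmul_def gen0_def)
  have "gen0 r n ! k = (if k = 0 then (1, 1 mod r) else (Suc k, 0))"
    using k n by (simp add: gen0_def nth_list_update nth_cid)
  thus "cmul r w (gen0 r n) ! k = w[0 := (fst (w!0), (snd (w!0) + 1) mod r)] ! k"
    using k n lw cperms_colour_less[OF w k]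
    by (auto simp: cmul_nth gen0_def nth_list_update prod_eq_iff mod_add_right_eq)
qed

lemma len_stat_swap_adj_le:
  assumes j: "Suc j < length w" and ne: "fst (w ! j) \<noteq> fst (w ! Suc j)"
  shows "len_stat pre (swap_adj j w) \<le> len_stat pre w + 1"
proof (cases "fst (w ! j) < fst (w ! Suc j)")
  case True
  thus ?thesis using len_stat_swap_adj[OF j True, of pre] by linarith
next
  case False
  hence "fst (swap_adj j w ! j) < fst (swap_adj j w ! Suc j)" using ne nth_swap_adj[OF j] by simp
  from len_stat_swap_adj[OF _ this, of pre] show ?thesis
    using j by (simp add: swap_adj_swap_adj split: if_splits)
qed

lemma len_stat_recolour_first:
  "len_stat [] ((v, z') # ys) + (if 0 < z then z else 0) =
   len_stat [] ((v, z) # ys) + (if 0 < z' then z' else 0)"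
  by simp

lemma cmul_gen_len_stat_le:
  assumes r: "0 < r" and n: "1 \<le> n" and w: "w \<in> cperms r n" and g: "g \<in> gens r n"
  shows "cmul r w g \<in> cperms r n \<and> len_stat [] (cmul r w g) \<le> len_stat [] w + 1"
proof -
  have lw: "length w = n" using w by (rule cperms_length)
  show ?thesis
  proof (cases "g = gen0 r n")
    case True
    define z' where "z' = (snd (w!0) + 1) mod r"
    have "cmul r w g = w[0 := (fst (w!0), z')]" using cmul_gen0[OF w n] True by (simp add: z'_def)
    moreover obtain v z ys where wx: "w = (v, z) # ys" using n lw by (cases w) auto
    moreover have "z < r" using cperms_colour_less[OF w, of 0] n wx by simp
    hence "(if 0 < z' then z' else 0) \<le> (if 0 < z then z else 0) + 1"
      using wx by (cases "z + 1 < r") (simp_all add: z'_def)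
    ultimately show ?thesis
      using recolour_first_cperms[OF w n, of z'] len_stat_recolour_first[of v z' ys z] r
      by (simp add: z'_def)
  next
    case False
    then obtain i where "g = geni n i" "1 \<le> i" "i < n" using g by (auto simp: gens_def)
    then obtain j where j: "g = geni n (Suc j)" "Suc j < n" by (cases i) auto
    have "fst (w ! j) \<noteq> fst (w ! Suc j)" using cperms_value_inject[OF w, of j "Suc j"] j by auto
    thus ?thesis
      using cmul_geni[OF w j(2)] swap_adj_cperms[OF w j(2)] len_stat_swap_adj_le[of j w] j lw
      by simp
  qed
qed

lemma len_stat_eq_0_cid:
  assumes w: "w \<in> cperms r n" and z: "len_stat [] w = 0"
  shows "w = cid n"
proof -
  have lw: "length w = n" using w by (rule cperms_length)
  have sz: "sorted_wrt (\<lambda>x y. fst x < fst y) w" "\<forall>x\<in>set w. snd x = 0"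
    using len_stat_eq_0D[OF z cperms_distinct[OF w]] by auto
  have "sorted_wrt (<) (map fst w)" using sz(1) by (simp add: sorted_wrt_map)
  hence "sorted (map fst w)" "distinct (map fst w)" by (auto simp: strict_sorted_iff)
  moreover have "sorted [1..<n+1]" "distinct [1..<n+1]" by (simp_all del: upt_Suc)
  moreover have "set (map fst w) = set [1..<n+1]" using w by (auto simp: cperms_iff)
  ultimately have mf: "map fst w = [1..<n+1]" by (rule sorted_distinct_set_unique)
  show ?thesis
  proof (rule nth_equalityI)
    fix k assume "k < length w"
    hence k: "k < n" using lw by simp
    have "fst (w!k) = Suc k" using arg_cong[OF mf, of "\<lambda>l. l ! k"] k lw by (simp del: upt_Suc)
    moreover have "snd (w!k) = 0" using sz(2) k lw by auto
    ultimately show "w ! k = cid n ! k" using nth_cid[OF k] by (simp add: prod_eq_iff)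
  qed (simp add: lw)
qed

lemma len_stat_eq_0_if_no_descent:
  assumes w: "w \<in> cperms r n" and n: "1 \<le> n" and z0: "snd (w ! 0) = 0"
    and asc: "\<And>j. Suc j < n \<Longrightarrow> fst (w ! j) < fst (w ! Suc j) \<Longrightarrow> snd (w ! Suc j) = 0"
    and desc: "\<And>j. Suc j < n \<Longrightarrow> fst (w ! Suc j) < fst (w ! j) \<Longrightarrow> snd (w ! j) \<noteq> 0"
  shows "len_stat [] w = 0"
proof -
  have lw: "length w = n" using w by (rule cperms_length)
  have step: "fst (w ! k) < fst (w ! Suc k)" if "snd (w ! k) = 0" "Suc k < n" for k
    using cperms_value_inject[OF w, of k "Suc k"] desc[OF that(2)] that by fastforce
  have zero: "snd (w ! k) = 0" if "k < n" for k
    using that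
  proof (induction k)
    case (Suc k)
    thus ?case using step asc by simp
  qed (use z0 in simp)
  have "sorted_wrt (\<lambda>x y. fst x < fst y) w"
  proof (subst sorted_wrt_iff_nth_Suc_transp)
    show "transp (\<lambda>x y. fst (x::nat \<times> nat) < fst y)" by (auto simp: transp_def)
    show "\<forall>i. Suc i < length w \<longrightarrow> fst (w ! i) < fst (w ! Suc i)" using step zero lw by simp
  qed
  moreover have "\<forall>x\<in>set w. snd x = 0" using zero lw by (metis in_set_conv_nth)
  ultimately show ?thesis by (rule len_stat_sorted)
qed

lemma len_stat_step_down:
  assumes r: "0 < r" and n: "1 \<le> n" and w: "w \<in> cperms r n" and pos: "0 < len_stat [] w"
  obtains w' g where "w' \<in> cperms r n" "g \<in> gens r n" "cmul r w' g = w"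
    "len_stat [] w' + 1 = len_stat [] w"
proof -
  note descent = that
  have lw: "length w = n" using w by (rule cperms_length)
  have swap: thesis
    if j: "Suc j < n" and lower: "len_stat [] (swap_adj j w) + 1 = len_stat [] w" for j
  proof -
    have "swap_adj j w \<in> cperms r n" by (rule swap_adj_cperms[OF w j])
    moreover have "cmul r (swap_adj j w) (geni n (Suc j)) = w"
      using cmul_geni[OF calculation j] swap_adj_swap_adj[of j w] j lw by simp
    ultimately show thesis using descent[of "swap_adj j w" "geni n (Suc j)"] lower j
      by (auto simp: gens_def)
  qed
  consider (coloured) "0 < snd (w ! 0)"
    | (asc) j where "Suc j < n" "fst (w ! j) < fst (w ! Suc j)" "0 < snd (w ! Suc j)"
    | (desc) j where "Suc j < n" "fst (w ! Suc j) < fst (w ! j)" "snd (w ! j) = 0"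
    | (none) "snd (w ! 0) = 0"
        "\<And>j. Suc j < n \<Longrightarrow> fst (w ! j) < fst (w ! Suc j) \<Longrightarrow> snd (w ! Suc j) = 0"
        "\<And>j. Suc j < n \<Longrightarrow> fst (w ! Suc j) < fst (w ! j) \<Longrightarrow> snd (w ! j) \<noteq> 0"
    by (metis neq0_conv)
  thus thesis
  proof cases
    case coloured
    obtain v z ys where wx: "w = (v, z) # ys" using n lw by (cases w) auto
    have z: "z < r" using cperms_colour_less[OF w, of 0] n wx by simp
    let ?w' = "w[0 := (v, z - 1)]"
    have "?w' \<in> cperms r n" using recolour_first_cperms[OF w n, of "z - 1"] z wx by simp
    moreover have "cmul r ?w' (gen0 r n) = w"
      using cmul_gen0[OF calculation n] coloured z wx by simp
    moreover have "len_stat [] ?w' + 1 = len_stat [] w"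
      using coloured len_stat_recolour_first[of v "z - 1" ys z] wx by simp
    ultimately show thesis using descent by (auto simp: gens_def)
  next
    case (asc j)
    thus thesis using swap len_stat_swap_adj[of j w "[]"] lw by simp
  next
    case (desc j)
    hence "fst (swap_adj j w ! j) < fst (swap_adj j w ! Suc j)"
      using nth_swap_adj[of j w] lw by simp
    from len_stat_swap_adj[OF _ this, of "[]"] show thesis
      using swap[OF desc(1)] desc nth_swap_adj[of j w] swap_adj_swap_adj[of j w] lw by simp
  next
    case none
    thus thesis using len_stat_eq_0_if_no_descent[OF w n] pos by simp
  qed
qed

lemma foldl_gens_len_stat_le:
  assumes r: "0 < r" and n: "1 \<le> n" and gs: "set gs \<subseteq> gens r n"
  shows "foldl (cmul r) (cid n) gs \<in> cperms r n \<and>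
         len_stat [] (foldl (cmul r) (cid n) gs) \<le> length gs"
  using gs
proof (induction gs rule: rev_induct)
  case Nil
  thus ?case using cid_cperms[OF r] len_stat_cid by simp
next
  case (snoc g gs)
  thus ?case using cmul_gen_len_stat_le[OF r n, of "foldl (cmul r) (cid n) gs" g] by fastforce
qed

lemma foldl_gens_exists:
  assumes r: "0 < r" and n: "1 \<le> n"
  shows "w \<in> cperms r n \<Longrightarrow> \<exists>gs. length gs = len_stat [] w \<and> set gs \<subseteq> gens r n \<and>
           foldl (cmul r) (cid n) gs = w"
proof (induction "len_stat [] w" arbitrary: w)
  case 0
  thus ?case using len_stat_eq_0_cid[OF 0(2)] by (intro exI[of _ "[]"]) simp
next
  case (Suc k)
  obtain w' g where w': "w' \<in> cperms r n" "g \<in> gens r n" "cmul r w' g = w"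
    "len_stat [] w' + 1 = len_stat [] w"
    using len_stat_step_down[OF r n Suc.prems] Suc.hyps(2) by auto
  have "k = len_stat [] w'" using w'(4) Suc.hyps(2) by simp
  then obtain gs where "length gs = k" "set gs \<subseteq> gens r n" "foldl (cmul r) (cid n) gs = w'"
    using Suc.hyps(1)[OF _ w'(1)] by metis
  thus ?case using w' Suc.hyps(2) by (intro exI[of _ "gs @ [g]"]) simp
qed

lemma clen_eq_len_stat:
  assumes r: "0 < r" and n: "1 \<le> n" and w: "w \<in> cperms r n"
  shows "clen r n w = len_stat [] w"
  unfolding clen_def
proof (rule Least_equality)
  show "\<exists>gs. length gs = len_stat [] w \<and> set gs \<subseteq> gens r n \<and> foldl (cmul r) (cid n) gs = w"
    by (rule foldl_gens_exists[OF r n w])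
  fix k assume "\<exists>gs. length gs = k \<and> set gs \<subseteq> gens r n \<and> foldl (cmul r) (cid n) gs = w"
  thus "len_stat [] w \<le> k" using foldl_gens_len_stat_le[OF r n] by blast
qed

lemma length_acode: "w \<in> cperms r n \<Longrightarrow> length (acode w) = n"
  by (induction rule: cperms_ainsert_induct) (simp add: acode_def, simp add: acode_ainsert)

definition code_len :: "(nat \<times> nat) list \<Rightarrow> nat" where
  "code_len cs = (\<Sum>j = 1..length cs. let (c, e) = cs ! (j - 1) in
                    j - c + (if e > 0 then 2 * (c - 1) + e else 0))"

lemma code_len_snoc:
  "code_len (cs @ [(p, e)]) =
     code_len cs + (Suc (length cs) - p + (if e > 0 then 2 * (p - 1) + e else 0))"
proof -
  have "(\<Sum>j = 1..length cs. let (c, e) = (cs @ [(p, e)]) ! (j - 1) in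
            j - c + (if e > 0 then 2 * (c - 1) + e else 0)) = code_len cs"
    unfolding code_len_def by (rule sum.cong) (auto simp: nth_append)
  thus ?thesis by (simp add: code_len_def)
qed

lemma length_bcode: "length (bcode r w) = length w"
proof -
  have "length (bcode_aux r j w) = j" for j w
    by (induction j arbitrary: w) (simp_all add: Let_def)
  thus ?thesis by (simp add: bcode_def)
qed

lemma sor_eq_code_len: "sor r w = code_len (bcode r w)"
  by (simp add: sor_def code_len_def length_bcode)

lemma len_stat_eq_code_len_acode: "w \<in> cperms r n \<Longrightarrow> len_stat [] w = code_len (acode w)"
proof (induction rule: cperms_ainsert_induct)
  case Nil
  show ?case by (simp add: acode_def code_len_def)
next
  case (ainsert m w p e)
  have lw: "length w = m" using ainsert.hyps(1) by (rule cperms_length)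
  have "\<forall>y\<in>set (take (p - 1) w @ drop (p - 1) w). fst y < Suc m"
    using cperms_values_less[OF ainsert.hyps(1)] by simp
  hence "len_stat [] (ainsert w p e) =
      len_stat [] w + (Suc m - p) + (if 0 < e then 2 * (p - 1) + e else 0)"
    using len_stat_insert_largest[of "[]" "Suc m" "take (p - 1) w" "drop (p - 1) w" e]
      ainsert.hyps(2,3)
    by (simp add: ainsert_def lw)
  thus ?case
    using ainsert.IH acode_ainsert[OF ainsert.hyps(1-4)] length_acode[OF ainsert.hyps(1)]
    by (simp add: code_len_snoc)
qed

section \<open>Transport of the statistics by \<open>phi\<close>\<close>

lemma phi_Nil: "0 < r \<Longrightarrow> phi r 0 [] = []"
  using phi_spec(1)[of r "[]" 0] by (simp add: cperms_0)

lemma Rmil_phi: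
  assumes "w \<in> cperms r n" and "t < r"
  shows "Rmil t w = Cyc r (cneg r t) (phi r n w)"
  using assms(1)
proof (induction rule: cperms_ainsert_induct)
  case Nil
  show ?case using phi_Nil assms(2) by (simp add: Cyc_def)
next
  case (ainsert m w p e)
  interpret binsert_step r m "phi r m w" p e
    using phi_spec(1) ainsert.hyps assms(2) by unfold_locales auto
  show ?case
    using ainsert phi_ainsert Rmil_ainsert Cyc_binsert cneg_inject[OF _ assms(2)] by simp
qed

lemma lr_maxima_phi:
  assumes "w \<in> cperms r n" and "t < r"
  shows "lr_maxima t w = lr_maxima (cneg r t) (phi r n w)"
  using assms(1)
proof (induction rule: cperms_ainsert_induct)
  case Nil
  show ?case using phi_Nil assms(2) by (simp add: lr_maxima_def)
next
  case (ainsert m w p e)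
  have u: "phi r m w \<in> cperms r m" using phi_spec(1) ainsert.hyps(1) assms(2) by simp
  show ?case
    using ainsert phi_ainsert lr_maxima_ainsert lr_maxima_binsert[OF u] cneg_inject[OF _ assms(2)]
      assms(2) by simp
qed

lemma Lmil_phi:
  assumes "w \<in> cperms r n" and "t < r" and "1 \<le> n"
  shows "Lmil t w = Lmic r (cneg r t) (phi r n w)"
  using assms(1,3)
proof (induction rule: cperms_ainsert_induct)
  case Nil
  thus ?case by simp
next
  case (ainsert m w p e)
  interpret binsert_step r m "phi r m w" p e
    using phi_spec(1) ainsert.hyps assms(2) by unfold_locales auto
  have Lmil: "Lmil t (ainsert w p e) = Lmil t w \<union> (if p = 1 \<and> e = t then {Suc m} else {})"
    by (rule Lmil_ainsert[OF ainsert.hyps(1-3)])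
  have e: "cneg r e = cneg r t \<longleftrightarrow> e = t" using cneg_inject[OF ainsert.hyps(4) assms(2)] .
  show ?case
  proof (cases "m = 0")
    case True
    hence "w = []" "p = 1" "phi r m w = []" using ainsert.hyps(1-3) u by (auto simp: cperms_0)
    moreover have "binsert r [] 1 e = [(1, cneg r e)]" by (simp add: binsert_def)
    ultimately show ?thesis
      using Lmil Lmic_singleton[OF cneg_less[OF r]] phi_ainsert[OF ainsert.hyps(1-4) r] True e
      by (simp add: Lmil_def)
  next
    case False
    thus ?thesis
      using Lmil Lmic_binsert ainsert.IH phi_ainsert[OF ainsert.hyps(1-4) r] e by simp
  qed
qed

theorem theorem4p1:
  fixes r n :: nat and w :: cword
  assumes "0 < r" and "1 \<le> n" and "w \<in> cperms r n"
  shows "clen r n w = sor r (phi r n w) \<and>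
         (\<forall>t < r. Rmil t w = Cyc r (cneg r t) (phi r n w) \<and>
                  Lmil t w = Lmic r (cneg r t) (phi r n w) \<and>
                  Lmal t w = Lmal (cneg r t) (phi r n w) \<and>
                  Lmap t w = Lmap (cneg r t) (phi r n w))"
proof -
  have "clen r n w = len_stat [] w" by (rule clen_eq_len_stat[OF assms])
  also have "\<dots> = code_len (bcode r (phi r n w))"
    using len_stat_eq_code_len_acode[OF assms(3)] phi_spec(2)[OF assms(1,3)] by simp
  finally have "clen r n w = sor r (phi r n w)" by (simp add: sor_eq_code_len)
  moreover have "\<forall>t < r. Rmil t w = Cyc r (cneg r t) (phi r n w) \<and>
                  Lmil t w = Lmic r (cneg r t) (phi r n w) \<and>
                  Lmal t w = Lmal (cneg r t) (phi r n w) \<and>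
                  Lmap t w = Lmap (cneg r t) (phi r n w)"
    using Rmil_phi[OF assms(3)] Lmil_phi[OF assms(3) _ assms(2)] lr_maxima_phi[OF assms(3)]
    by (simp add: Lmal_eq_image Lmap_eq_image)
  ultimately show ?thesis by simp
qed

end
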